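(* Let $L \geq 1$ and $1 \leq n < L$, and suppose $p_k>0$ and $q_k>0$ for all $1\le k\le n$. Then the continuous-time Markov chain on $\Omega_{L,n}$ described in the context is irreducible; equivalently, the chain on $\mathcal{A}_{L,n}$ is irreducible.
   Context: Particle labels $k$ are taken modulo $n$ (in $\{1,\dots,n\}$), positions modulo $L$. $\Omega_{L,n}$ is the set of words $w_1\cdots w_L$ on the ring $\mathbb{Z}/L\mathbb{Z}$ over the alphabet $\{\bullet_1,\dots,\bullet_n,\Box_1,\dots,\Box_n\}$ in which each $\bullet_k$ occurs exactly once, the letters $\bullet_1,\dots,\bullet_n$ appear in this cyclic order around the ring, and the remaining $L-n$ letters are arbitrary $\Box_i$'s. The chain has transitions (displayed segments are consecutive positions on the ring, the rest unchanged, $C$ a possibly empty word in the $\Box$-letters only): (T1) $\bullet_k\Box_i \to \Box_i\bullet_k$ at rate $p_k$, if $i\neq k$; (T2) $\bullet_{k-1}\,C\,\bullet_k\Box_k \to \bullet_{k-1}\Box_{k-1}\,C\,\bullet_k$ at rate $p_k$; (T3) $\Box_i\bullet_k \to \bullet_k\Box_i$ at rate $q_k$, if $i\neq k$; (T4) $\Box_k\bullet_k\,C\,\bullet_{k+1} \to \bullet_k\,C\,\Box_{k+1}\bullet_{k+1}$ at rate $q_k$. $\mathcal{A}_{L,n}$ is the set of arrays with $n$ rows (indexed mod $n$) and $L$ columns (indexed mod $L$) with entries in $\{\cdot,\bullet,\Box\}$, exactly one $\bullet$ per row, exactly one non-$\cdot$ entry per column, and the columns of the $\bullet$'s in rows $1,\dots,n$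 cyclically increasing; it is identified with $\Omega_{L,n}$ by letting $w_j=\bullet_k$ (resp. $\Box_k$) when the particle in column $j$ is a $\bullet$ (resp. $\Box$) in row $k$, and carries the transported dynamics. *)

theory Defs
  imports Complex_Main
begin

text \<open>Letters: Bul k is the particle bullet_k, Box i is the hole letter box_i.
  Labels are taken in {0..<n} (the paper's label k corresponds to k-1 here);
  label arithmetic is mod n. Words on the ring Z/LZ are lists of length L,
  positions are read modulo L.\<close>

datatype letter = Bul nat | Box nat

fun is_bul :: "letter \<Rightarrow> bool" where
  "is_bul (Bul _) = True" | "is_bul (Box _) = False"

fun label :: "letter \<Rightarrow> nat" where
  "label (Bul k) = k" | "label (Box i) = i"

definition wat :: "letter list \<Rightarrow> nat \<Rightarrow> letter" where
  "wat w x = w ! (x mod length w)"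

definition Omega :: "nat \<Rightarrow> nat \<Rightarrow> letter list set" where
  "Omega L n = {w. length w = L
      \<and> (\<forall>j<L. label (w ! j) < n)
      \<and> (\<forall>k<n. card {j. j < L \<and> w ! j = Bul k} = 1)
      \<and> (\<forall>j<L. \<forall>k d. w ! j = Bul k \<and> 1 \<le> d \<and> is_bul (wat w (j + d))
             \<and> (\<forall>e. 1 \<le> e \<and> e < d \<longrightarrow> \<not> is_bul (wat w (j + e)))
           \<longrightarrow> wat w (j + d) = Bul ((k + 1) mod n))}"

text \<open>Distance (going backwards, resp. forwards) from position j to the nearest
  other particle slot; equals L if the particle at j is the only one.\<close>
definition prev_dist :: "letter list \<Rightarrow> nat \<Rightarrow> nat" where
  "prev_dist w j = (LEAST m. 1 \<le> m \<and> is_bul (wat w (j + length w - m)))"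

definition next_dist :: "letter list \<Rightarrow> nat \<Rightarrow> nat" where
  "next_dist w j = (LEAST m. 1 \<le> m \<and> is_bul (wat w (j + m)))"

text \<open>Result of (T2) for particle k at position j whose preceding particle is at
  distance m behind: bullet_{k-1} C bullet_k box_k -> bullet_{k-1} box_{k-1} C bullet_k.\<close>
definition t2_res :: "nat \<Rightarrow> letter list \<Rightarrow> nat \<Rightarrow> nat \<Rightarrow> nat \<Rightarrow> letter list" where
  "t2_res n w j m k = (let L = length w in
     map (\<lambda>x. let r = (j + 1 + L - x) mod L in
       if r = 0 then Bul k
       else if r < m then wat w (x + L - 1)
       else if r = m then Box ((k + n - 1) mod n)
       else w ! x) [0..<L])"

text \<open>Result of (T4) for particle k at position j whose following particle is at
  distance m ahead: box_k bullet_k C bullet_{k+1} -> bullet_k C box_{k+1} bullet_{k+1}.\<close>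
definition t4_res :: "nat \<Rightarrow> letter list \<Rightarrow> nat \<Rightarrow> nat \<Rightarrow> nat \<Rightarrow> letter list" where
  "t4_res n w j m k = (let L = length w in
     map (\<lambda>x. let r = (x + L - (j + L - 1) mod L) mod L in
       if r = 0 then Bul k
       else if r < m then wat w (x + 1)
       else if r = m then Box ((k + 1) mod n)
       else w ! x) [0..<L])"

definition rate_T1 :: "nat \<Rightarrow> (nat \<Rightarrow> real) \<Rightarrow> letter list \<Rightarrow> letter list \<Rightarrow> nat \<Rightarrow> real" where
  "rate_T1 n p w w' j = (let L = length w in
     case (wat w j, wat w (j + 1)) of
       (Bul k, Box i) \<Rightarrow>
         if i \<noteq> k \<and> w' = w[j mod L := Box i, (j + 1) mod L := Bul k] then p k else 0
     | _ \<Rightarrow> 0)"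

definition rate_T2 :: "nat \<Rightarrow> (nat \<Rightarrow> real) \<Rightarrow> letter list \<Rightarrow> letter list \<Rightarrow> nat \<Rightarrow> real" where
  "rate_T2 n p w w' j = (let L = length w; m = prev_dist w j in
     case (wat w j, wat w (j + 1)) of
       (Bul k, Box i) \<Rightarrow>
         if i = k \<and> wat w (j + L - m) = Bul ((k + n - 1) mod n)
            \<and> w' = t2_res n w j m k then p k else 0
     | _ \<Rightarrow> 0)"

definition rate_T3 :: "nat \<Rightarrow> (nat \<Rightarrow> real) \<Rightarrow> letter list \<Rightarrow> letter list \<Rightarrow> nat \<Rightarrow> real" where
  "rate_T3 n q w w' j = (let L = length w in
     case (wat w j, wat w (j + L - 1)) of
       (Bul k, Box i) \<Rightarrow>
         if i \<noteq> k \<and> w' = w[j mod L := Box i, (j + L - 1) mod L := Bul k] then q k else 0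
     | _ \<Rightarrow> 0)"

definition rate_T4 :: "nat \<Rightarrow> (nat \<Rightarrow> real) \<Rightarrow> letter list \<Rightarrow> letter list \<Rightarrow> nat \<Rightarrow> real" where
  "rate_T4 n q w w' j = (let L = length w; m = next_dist w j in
     case (wat w j, wat w (j + L - 1)) of
       (Bul k, Box i) \<Rightarrow>
         if i = k \<and> wat w (j + m) = Bul ((k + 1) mod n)
            \<and> w' = t4_res n w j m k then q k else 0
     | _ \<Rightarrow> 0)"

definition Q_rate :: "nat \<Rightarrow> (nat \<Rightarrow> real) \<Rightarrow> (nat \<Rightarrow> real) \<Rightarrow> letter list \<Rightarrow> letter list \<Rightarrow> real" where
  "Q_rate n p q w w' = (\<Sum>j<length w.
      rate_T1 n p w w' j + rate_T2 n p w w' j + rate_T3 n q w w' j + rate_T4 n q w w' j)"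

definition irreducible_ctmc :: "'a set \<Rightarrow> ('a \<Rightarrow> 'a \<Rightarrow> real) \<Rightarrow> bool" where
  "irreducible_ctmc S Q \<longleftrightarrow>
     (\<forall>x\<in>S. \<forall>y\<in>S. (x, y) \<in> {(a, b). a \<in> S \<and> b \<in> S \<and> a \<noteq> b \<and> Q a b > 0}\<^sup>*)"

end

theory Submission
  imports Defs
begin

text \<open>Cutting the ring in front of the bullet with label \<open>0\<close>, every configuration is a
  rotation of a standard word: the bullets in increasing order, each followed by a block of
  boxes. The first box of a block whose label differs from that of its bullet can be pushed
  across the bullet to the end of the previous block and back, by (T1) and (T3). If instead it
  carries the label of its bullet, (T2) turns it into the first box of the previous block,
  relabelled accordingly. This is not reversible in one step, but repeating it once for every
  bullet brings the configuration back shifted by one site, so the move lies on a cycle of the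
  transition graph. With these moves every configuration communicates with a rotation of the
  ground configuration, in which all boxes carry label \<open>0\<close> and follow the bullet with label
  \<open>0\<close>; and on the same cycle the ground configuration communicates with all its rotations. For
  a single particle, (T2) alone performs the rotation.\<close>

lemma wat_lt: "x < length w \<Longrightarrow> wat w x = w ! x"
  by (simp add: wat_def)

lemma wat_in_set: "w \<noteq> [] \<Longrightarrow> wat w j \<in> set w"
  by (simp add: wat_def)

lemma wat_rotate1: "w \<noteq> [] \<Longrightarrow> wat (rotate1 w) x = wat w (Suc x)"
  unfolding wat_def by (simp add: nth_rotate1 mod_Suc_eq)

lemma wat_rotate1_mod: "w \<noteq> [] \<Longrightarrow> wat (rotate1 w) x = wat w (Suc x mod length w)"
  by (simp add: wat_rotate1) (simp add: wat_def)

lemma wat_pred: "1 \<le> x \<Longrightarrow> x \<le> length w \<Longrightarrow> wat w (x + length w - 1) = w ! (x - 1)"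
proof -
  assume "1 \<le> x" "x \<le> length w"
  then have "x + length w - 1 = (x - 1) + length w" "x - 1 < length w" by arith+
  then have "(x + length w - 1) mod length w = x - 1" by (simp only: mod_add_self2 mod_less)
  then show ?thesis unfolding wat_def by simp
qed

lemma is_bul_eq_Bul: "is_bul c \<Longrightarrow> c = Bul (label c)"
  by (cases c) auto

definition cyclically_ordered :: "nat \<Rightarrow> letter list \<Rightarrow> bool" where
  "cyclically_ordered n w \<longleftrightarrow> (\<forall>j<length w. \<forall>k d. w ! j = Bul k \<and> 1 \<le> d \<and> is_bul (wat w (j + d))
       \<and> (\<forall>e. 1 \<le> e \<and> e < d \<longrightarrow> \<not> is_bul (wat w (j + e)))
     \<longrightarrow> wat w (j + d) = Bul ((k + 1) mod n))"

lemma Omega_iff: "w \<in> Omega L n \<longleftrightarrow> length w = L \<and> (\<forall>x\<in>set w. label x < n)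
   \<and> (\<forall>k<n. length (filter (\<lambda>x. x = Bul k) w) = 1) \<and> cyclically_ordered n w"
  unfolding Omega_def cyclically_ordered_def length_filter_conv_card
  by (auto simp: all_set_conv_all_nth)

lemma cyclically_ordered_rotate1:
  assumes "cyclically_ordered n w" "w \<noteq> []"
  shows "cyclically_ordered n (rotate1 w)"
  unfolding cyclically_ordered_def
proof (intro allI impI)
  fix j k d
  assume j: "j < length (rotate1 w)"
    and h: "rotate1 w ! j = Bul k \<and> 1 \<le> d \<and> is_bul (wat (rotate1 w) (j + d))
             \<and> (\<forall>e. 1 \<le> e \<and> e < d \<longrightarrow> \<not> is_bul (wat (rotate1 w) (j + e)))"
  define j0 where "j0 = Suc j mod length w"
  have j0: "j0 < length w" using assms(2) by (simp add: j0_def)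
  have shift: "wat (rotate1 w) (j + e) = wat w (j0 + e)" for e
    using assms(2) by (simp add: wat_rotate1, simp add: wat_def j0_def mod_add_left_eq)
  have "w ! j0 = Bul k" using h j by (simp add: nth_rotate1 j0_def)
  then show "wat (rotate1 w) (j + d) = Bul ((k + 1) mod n)"
    using assms(1) j0 h unfolding cyclically_ordered_def shift by blast
qed

lemma Omega_rotate1: "w \<in> Omega L n \<Longrightarrow> rotate1 w \<in> Omega L n"
proof -
  have filter_rotate1: "length (filter P (rotate1 xs)) = length (filter P xs)" for P and xs :: "letter list"
    by (cases xs) auto
  show "w \<in> Omega L n \<Longrightarrow> rotate1 w \<in> Omega L n"
    unfolding Omega_iff by (cases "w = []") (auto simp: filter_rotate1 cyclically_ordered_rotate1)
qed

lemma Omega_rotate: "w \<in> Omega L n \<Longrightarrow> rotate c w \<in> Omega L n"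
  by (induction c) (auto simp: Omega_rotate1)

section \<open>Standard words\<close>

definition ordered_bullets :: "nat \<Rightarrow> letter list \<Rightarrow> bool" where
  "ordered_bullets n x \<longleftrightarrow> (\<forall>i j. i < j \<and> j < length x \<and> is_bul (x ! i) \<and> is_bul (x ! j)
     \<and> (\<forall>e. i < e \<and> e < j \<longrightarrow> \<not> is_bul (x ! e)) \<longrightarrow> label (x ! j) = (label (x ! i) + 1) mod n)"

definition first_bullet_succ :: "nat \<Rightarrow> letter list \<Rightarrow> nat \<Rightarrow> bool" where
  "first_bullet_succ n x a \<longleftrightarrow>
     (\<forall>j<length x. is_bul (x ! j) \<and> (\<forall>e<j. \<not> is_bul (x ! e)) \<longrightarrow> label (x ! j) = (a + 1) mod n)"

lemma ordered_bullets_Nil [simp]: "ordered_bullets n []"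
  by (simp add: ordered_bullets_def)

lemma ordered_bullets_Cons:
  "ordered_bullets n (c # x) \<longleftrightarrow> ordered_bullets n x \<and> (is_bul c \<longrightarrow> first_bullet_succ n x (label c))"
proof
  assume H: "ordered_bullets n (c # x)"
  have "ordered_bullets n x" unfolding ordered_bullets_def
  proof (intro allI impI)
    fix i j assume a: "i < j \<and> j < length x \<and> is_bul (x ! i) \<and> is_bul (x ! j)
      \<and> (\<forall>e. i < e \<and> e < j \<longrightarrow> \<not> is_bul (x ! e))"
    have "\<forall>e. Suc i < e \<and> e < Suc j \<longrightarrow> \<not> is_bul ((c # x) ! e)"
    proof (intro allI impI)
      fix e assume "Suc i < e \<and> e < Suc j"
      then obtain e' where "e = Suc e'" "i < e'" "e' < j" by (cases e) auto
      then show "\<not> is_bul ((c # x) ! e)" using a by simp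
    qed
    then show "label (x ! j) = (label (x ! i) + 1) mod n"
      using H[unfolded ordered_bullets_def, rule_format, of "Suc i" "Suc j"] a by simp
  qed
  moreover have "is_bul c \<longrightarrow> first_bullet_succ n x (label c)" unfolding first_bullet_succ_def
  proof (intro allI impI)
    fix j assume c: "is_bul c" and a: "j < length x" "is_bul (x ! j) \<and> (\<forall>e<j. \<not> is_bul (x ! e))"
    have "\<forall>e. 0 < e \<and> e < Suc j \<longrightarrow> \<not> is_bul ((c # x) ! e)"
    proof (intro allI impI)
      fix e assume "0 < e \<and> e < Suc j"
      then obtain e' where "e = Suc e'" "e' < j" by (cases e) auto
      then show "\<not> is_bul ((c # x) ! e)" using a by simp
    qed
    then show "label (x ! j) = (label c + 1) mod n"
      using H[unfolded ordered_bullets_def, rule_format, of 0 "Suc j"] a c by simp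
  qed
  ultimately show "ordered_bullets n x \<and> (is_bul c \<longrightarrow> first_bullet_succ n x (label c))" ..
next
  assume H: "ordered_bullets n x \<and> (is_bul c \<longrightarrow> first_bullet_succ n x (label c))"
  show "ordered_bullets n (c # x)" unfolding ordered_bullets_def
  proof (intro allI impI)
    fix i j assume a: "i < j \<and> j < length (c # x) \<and> is_bul ((c # x) ! i) \<and> is_bul ((c # x) ! j)
      \<and> (\<forall>e. i < e \<and> e < j \<longrightarrow> \<not> is_bul ((c # x) ! e))"
    then obtain j' where j': "j = Suc j'" by (cases j) auto
    show "label ((c # x) ! j) = (label ((c # x) ! i) + 1) mod n"
    proof (cases i)
      case 0
      have "\<forall>e<j'. \<not> is_bul (x ! e)"
      proof (intro allI impI)
        fix e assume "e < j'"
        then show "\<not> is_bul (x ! e)" using a j' 0 by (auto dest!: spec[of _ "Suc e"])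
      qed
      then show ?thesis using H a j' 0 unfolding first_bullet_succ_def by auto
    next
      case (Suc i')
      have "\<forall>e. i' < e \<and> e < j' \<longrightarrow> \<not> is_bul (x ! e)"
      proof (intro allI impI)
        fix e assume "i' < e \<and> e < j'"
        then show "\<not> is_bul (x ! e)" using a j' Suc by (auto dest!: spec[of _ "Suc e"])
      qed
      then show ?thesis using H a j' Suc unfolding ordered_bullets_def by auto
    qed
  qed
qed

lemma first_bullet_succ_Box [simp]: "first_bullet_succ n (Box b # x) a \<longleftrightarrow> first_bullet_succ n x a"
proof
  assume H: "first_bullet_succ n (Box b # x) a"
  show "first_bullet_succ n x a" unfolding first_bullet_succ_def
  proof (intro allI impI)
    fix j assume a: "j < length x" "is_bul (x ! j) \<and> (\<forall>e<j. \<not> is_bul (x ! e))"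
    have "\<forall>e<Suc j. \<not> is_bul ((Box b # x) ! e)"
      using a by (auto simp: less_Suc_eq_0_disj)
    then show "label (x ! j) = (a + 1) mod n"
      using H[unfolded first_bullet_succ_def, rule_format, of "Suc j"] a by simp
  qed
next
  assume H: "first_bullet_succ n x a"
  show "first_bullet_succ n (Box b # x) a" unfolding first_bullet_succ_def
  proof (intro allI impI)
    fix j assume a: "j < length (Box b # x)"
      "is_bul ((Box b # x) ! j) \<and> (\<forall>e<j. \<not> is_bul ((Box b # x) ! e))"
    then obtain j' where j': "j = Suc j'" by (cases j) auto
    have "\<forall>e<j'. \<not> is_bul (x ! e)"
    proof (intro allI impI)
      fix e assume "e < j'"
      then show "\<not> is_bul (x ! e)" using a j' by (auto dest!: spec[of _ "Suc e"])
    qed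
    then show "label ((Box b # x) ! j) = (a + 1) mod n" using H a j' unfolding first_bullet_succ_def by auto
  qed
qed

lemma first_bullet_succ_Bul [simp]: "first_bullet_succ n (Bul b # x) a \<longleftrightarrow> b = (a + 1) mod n"
proof
  assume "first_bullet_succ n (Bul b # x) a"
  then show "b = (a + 1) mod n" unfolding first_bullet_succ_def by (auto dest!: spec[of _ 0])
next
  assume "b = (a + 1) mod n"
  then show "first_bullet_succ n (Bul b # x) a" unfolding first_bullet_succ_def
    by (auto simp: nth_Cons split: nat.splits)
qed

lemma first_bullet_succ_map_Box [simp]: "first_bullet_succ n (map Box c @ x) a \<longleftrightarrow> first_bullet_succ n x a"
  by (induction c) auto

lemma ordered_bullets_Box [simp]: "ordered_bullets n (Box b # x) \<longleftrightarrow> ordered_bullets n x"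
  by (simp add: ordered_bullets_Cons)

lemma ordered_bullets_Bul [simp]:
  "ordered_bullets n (Bul a # x) \<longleftrightarrow> ordered_bullets n x \<and> first_bullet_succ n x a"
  by (simp add: ordered_bullets_Cons)

lemma ordered_bullets_map_Box [simp]: "ordered_bullets n (map Box c @ x) \<longleftrightarrow> ordered_bullets n x"
  by (induction c) auto

lemma ordered_bullets_blocks:
  "ordered_bullets n (concat (map (\<lambda>i. Bul ((a + i) mod n) # map Box (h i)) [0..<m]))"
proof (induction m arbitrary: a h)
  case 0
  then show ?case by simp
next
  case (Suc m)
  have upt: "[0..<Suc m] = 0 # map Suc [0..<m]" by (simp add: upt_conv_Cons map_Suc_upt)
  define rest where "rest = concat (map (\<lambda>i. Bul ((Suc a + i) mod n) # map Box (h (Suc i))) [0..<m])"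
  have "ordered_bullets n rest" unfolding rest_def using Suc.IH[of "Suc a" "\<lambda>i. h (Suc i)"] by simp
  moreover have "first_bullet_succ n rest (a mod n)"
  proof (cases m)
    case (Suc m')
    then have "[0..<m] = 0 # map Suc [0..<m']" by (simp add: upt_conv_Cons map_Suc_upt)
    then show ?thesis by (simp add: rest_def mod_Suc_eq)
  qed (simp add: rest_def first_bullet_succ_def)
  moreover have "concat (map (\<lambda>i. Bul ((a + i) mod n) # map Box (h i)) [0..<Suc m])
      = Bul (a mod n) # map Box (h 0) @ rest"
    unfolding upt rest_def by (simp add: comp_def)
  ultimately show ?case by simp
qed

text \<open>Every gap between two consecutive bullets of the ring appears inside the doubled word.\<close>

lemma cyclically_ordered_of_double:
  assumes "w \<noteq> []" "ordered_bullets n (w @ w)"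
  shows "cyclically_ordered n w"
  unfolding cyclically_ordered_def
proof (intro allI impI)
  fix j k d
  assume j: "j < length w" and h: "w ! j = Bul k \<and> 1 \<le> d \<and> is_bul (wat w (j + d))
             \<and> (\<forall>e. 1 \<le> e \<and> e < d \<longrightarrow> \<not> is_bul (wat w (j + e)))"
  have double: "(w @ w) ! t = wat w t" if "t < 2 * length w" for t
    using that unfolding wat_def by (auto simp: nth_append le_mod_geq)
  have dL: "d \<le> length w"
  proof (rule ccontr)
    assume "\<not> d \<le> length w"
    moreover have "1 \<le> length w" using assms(1) by (simp add: Suc_leI)
    ultimately have "\<not> is_bul (wat w (j + length w))" using h by simp
    moreover have "wat w (j + length w) = w ! j" using j by (simp add: wat_def)
    ultimately show False using h by simp
  qed
  have gap: "\<forall>e. j < e \<and> e < j + d \<longrightarrow> \<not> is_bul ((w @ w) ! e)"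
  proof (intro allI impI)
    fix e assume e: "j < e \<and> e < j + d"
    then have "(w @ w) ! e = wat w (j + (e - j))" using j dL by (simp add: double)
    moreover have "1 \<le> e - j \<and> e - j < d" using e by auto
    then have "\<not> is_bul (wat w (j + (e - j)))" using h by blast
    ultimately show "\<not> is_bul ((w @ w) ! e)" by simp
  qed
  have "(w @ w) ! j = Bul k" using h j by (simp add: nth_append)
  moreover have "(w @ w) ! (j + d) = wat w (j + d)" using j dL by (intro double) auto
  ultimately have "label (wat w (j + d)) = (k + 1) mod n"
    using assms(2)[unfolded ordered_bullets_def, rule_format, of j "j + d"] gap h j dL by simp
  then show "wat w (j + d) = Bul ((k + 1) mod n)" using h is_bul_eq_Bul by metis
qed

lemma ordered_bullets_of_cyclically_ordered:
  assumes "cyclically_ordered n w"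
  shows "ordered_bullets n w"
  unfolding ordered_bullets_def
proof (intro allI impI)
  fix i j assume a: "i < j \<and> j < length w \<and> is_bul (w ! i) \<and> is_bul (w ! j)
    \<and> (\<forall>e. i < e \<and> e < j \<longrightarrow> \<not> is_bul (w ! e))"
  define d where "d = j - i"
  have w1: "wat w (i + d) = w ! j" using a by (simp add: d_def wat_lt)
  have "\<forall>e. 1 \<le> e \<and> e < d \<longrightarrow> \<not> is_bul (wat w (i + e))"
    using a by (auto simp: d_def wat_lt)
  moreover have "w ! i = Bul (label (w ! i))" using a is_bul_eq_Bul by blast
  moreover have "1 \<le> d" using a unfolding d_def by linarith
  ultimately have "wat w (i + d) = Bul ((label (w ! i) + 1) mod n)"
    using assms[unfolded cyclically_ordered_def, rule_format, of i "label (w ! i)" d] a w1 by simp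
  then show "label (w ! j) = (label (w ! i) + 1) mod n" using w1 by simp
qed

definition block :: "(nat \<Rightarrow> nat list) \<Rightarrow> nat \<Rightarrow> letter list" where
  "block g i = Bul i # map Box (g i)"

definition std_word :: "nat \<Rightarrow> (nat \<Rightarrow> nat list) \<Rightarrow> letter list" where
  "std_word n g = concat (map (block g) [0..<n])"

definition admissible :: "nat \<Rightarrow> nat \<Rightarrow> (nat \<Rightarrow> nat list) \<Rightarrow> bool" where
  "admissible n L g \<longleftrightarrow> (\<forall>k<n. \<forall>x\<in>set (g k). x < n) \<and> length (std_word n g) = L"

lemma std_word_0 [simp]: "std_word 0 g = []"
  by (simp add: std_word_def)

lemma std_word_Suc: "std_word (Suc n) g = std_word n g @ block g n"
  by (simp add: std_word_def)

lemma std_word_cong: "(\<And>i. i < k \<Longrightarrow> g i = h i) \<Longrightarrow> std_word k g = std_word k h"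
  unfolding std_word_def block_def by (intro arg_cong[where f = concat] map_cong) auto

lemma blocks_cong: "(\<And>i. a \<le> i \<Longrightarrow> i < b \<Longrightarrow> g i = h i) \<Longrightarrow>
   concat (map (block g) [a..<b]) = concat (map (block h) [a..<b])"
  unfolding block_def by (intro arg_cong[where f = concat] map_cong) auto

lemma std_word_split:
  assumes "k < n"
  shows "std_word n g = std_word k g @ block g k @ concat (map (block g) [Suc k..<n])"
proof -
  have "[0..<n] = [0..<k] @ k # [Suc k..<n]"
    using upt_add_eq_append[of 0 k "n - k"] upt_conv_Cons[of k n] assms by simp
  then show ?thesis unfolding std_word_def by simp
qed

lemma std_word_split_first_last:
  assumes "2 \<le> n"
  shows "std_word n g = block g 0 @ concat (map (block g) [1..<n - 1]) @ block g (n - 1)"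
proof -
  have "[1..<n] = [1..<n - 1] @ [n - 1]" using upt_Suc_append[of 1 "n - 1"] assms by simp
  then show ?thesis using std_word_split[of 0 n g] assms by simp
qed

lemma std_word_as_blocks:
  "std_word n g = concat (map (\<lambda>i. Bul ((0 + i) mod n) # map Box (g (i mod n))) [0..<n])"
  unfolding std_word_def block_def by (intro arg_cong[where f = concat] map_cong) auto

lemma std_word_double:
  "std_word n g @ std_word n g = concat (map (\<lambda>i. Bul ((0 + i) mod n) # map Box (g (i mod n))) [0..<n + n])"
proof -
  let ?F = "\<lambda>i. Bul ((0 + i) mod n) # map Box (g (i mod n))"
  have "[0..<n + n] = [0..<n] @ map (\<lambda>i. i + n) [0..<n]"
    by (simp only: map_add_upt upt_add_eq_append[OF le0])
  moreover have "map ?F (map (\<lambda>i. i + n) [0..<n]) = map ?F [0..<n]" by simp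
  ultimately show ?thesis by (simp only: map_append concat_append std_word_as_blocks[symmetric])
qed

lemma length_std_word: "length (std_word n g) = (\<Sum>i<n. Suc (length (g i)))"
  by (induction n) (auto simp: std_word_Suc block_def)

lemma length_std_word_Cons:
  assumes "i < n"
  shows "length (std_word n (g(i := x # g i))) = Suc (length (std_word n g))"
proof -
  have "(\<Sum>j<n. Suc (length ((g(i := x # g i)) j)))
      = (\<Sum>j<n. Suc (length (g j)) + (if j = i then 1 else 0))"
    by (intro sum.cong) auto
  also have "\<dots> = (\<Sum>j<n. Suc (length (g j))) + (\<Sum>j<n. (if j = i then 1 else 0))"
    by (rule sum.distrib)
  also have "(\<Sum>j<n. (if j = i then 1 else 0)) = (1::nat)" using assms by simp
  finally show ?thesis by (simp add: length_std_word)
qed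

lemma length_std_word_single_block:
  assumes "1 \<le> n" "\<forall>i. 1 \<le> i \<and> i < n \<longrightarrow> g i = []"
  shows "length (std_word n g) = n + length (g 0)"
proof -
  have "(\<Sum>i<n. Suc (length (g i))) = (\<Sum>i<n. 1 + (if i = 0 then length (g 0) else 0))"
    using assms(2) by (intro sum.cong) auto
  also have "\<dots> = (\<Sum>i<n. 1) + (\<Sum>i<n. (if i = 0 then length (g 0) else 0))"
    by (rule sum.distrib)
  also have "\<dots> = n + length (g 0)" using assms(1) by simp
  finally show ?thesis by (simp add: length_std_word)
qed

lemma set_std_word: "x \<in> set (std_word n g) \<longleftrightarrow> (\<exists>i<n. x = Bul i \<or> (\<exists>b\<in>set (g i). x = Box b))"
  by (auto simp: std_word_def block_def)

lemma count_Bul_std_word: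
  "length (filter (\<lambda>x. x = Bul k) (std_word n g)) = (if k < n then 1 else 0)"
  by (induction n) (auto simp: std_word_Suc block_def filter_empty_conv)

lemma std_word_in_Omega:
  assumes "admissible n L g" "1 \<le> n"
  shows "std_word n g \<in> Omega L n"
proof -
  have "ordered_bullets n (std_word n g @ std_word n g)"
    unfolding std_word_double by (rule ordered_bullets_blocks)
  moreover have "std_word n g \<noteq> []" using assms(2) by (cases n) (auto simp: std_word_Suc block_def)
  ultimately have "cyclically_ordered n (std_word n g)" by (intro cyclically_ordered_of_double)
  then show ?thesis using assms(1)
    unfolding Omega_iff admissible_def by (auto simp: count_Bul_std_word set_std_word)
qed

lemma length_filter_is_bul:
  "(\<forall>x\<in>set w. label x < n) \<Longrightarrow>
     length (filter is_bul w) = (\<Sum>k<n. length (filter (\<lambda>x. x = Bul k) w))"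
proof (induction w)
  case (Cons c w)
  then have IH: "length (filter is_bul w) = (\<Sum>k<n. length (filter (\<lambda>x. x = Bul k) w))" by simp
  show ?case
  proof (cases c)
    case (Bul a)
    then have "a < n" using Cons.prems by simp
    have "(\<Sum>k<n. length (filter (\<lambda>x. x = Bul k) (c # w)))
        = (\<Sum>k<n. length (filter (\<lambda>x. x = Bul k) w) + (if a = k then 1 else 0))"
      using Bul by (intro sum.cong) auto
    also have "\<dots> = (\<Sum>k<n. length (filter (\<lambda>x. x = Bul k) w)) + 1"
      using \<open>a < n\<close> by (simp add: sum.distrib)
    finally show ?thesis using IH Bul by simp
  next
    case (Box b)
    then show ?thesis using IH by simp
  qed
qed simp

lemma map_Box_label: "(\<forall>z\<in>set c. \<not> is_bul z) \<Longrightarrow> map Box (map label c) = c"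
proof (induction c)
  case (Cons a c)
  then show ?case by (cases a) auto
qed simp

lemma ordered_bullets_decompose:
  "ordered_bullets n x \<Longrightarrow> x = Bul a # y \<Longrightarrow> a < n \<Longrightarrow>
     \<exists>m h. x = concat (map (\<lambda>i. Bul ((a + i) mod n) # map Box (h i)) [0..<Suc m])"
proof (induction "length x" arbitrary: x a y rule: less_induct)
  case less
  define c where "c = takeWhile (\<lambda>z. \<not> is_bul z) y"
  define z where "z = dropWhile (\<lambda>z. \<not> is_bul z) y"
  have y: "y = c @ z" by (simp add: c_def z_def)
  have c: "map Box (map label c) = c" unfolding c_def
    by (rule map_Box_label) (auto dest: set_takeWhileD)
  show ?case
  proof (cases z)
    case Nil
    have "x = concat (map (\<lambda>i. Bul ((a + i) mod n) # map Box ((\<lambda>_. map label c) i)) [0..<Suc 0])"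
      using less.prems y Nil c by simp
    then show ?thesis by (intro exI[where x = 0] exI[where x = "\<lambda>_. map label c"]) simp
  next
    case (Cons b z')
    have "is_bul b" using Cons unfolding z_def dropWhile_eq_Cons_conv by simp
    then obtain b' where b: "b = Bul b'" by (cases b) auto
    have ordered: "ordered_bullets n (Bul a # map Box (map label c) @ z)" using less.prems y c by simp
    then have "first_bullet_succ n z a" by (simp only: ordered_bullets_Bul first_bullet_succ_map_Box)
    then have b': "b' = (a + 1) mod n" using Cons b by simp
    have "ordered_bullets n z" using ordered by (simp only: ordered_bullets_Bul ordered_bullets_map_Box)
    moreover have "length z < length x" using less.prems y by simp
    moreover have "b' < n" using b' less.prems by simp
    ultimately obtain m' h' where z: "z = concat (map (\<lambda>i. Bul ((b' + i) mod n) # map Box (h' i)) [0..<Suc m'])"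
      using less.hyps Cons b by blast
    define h where "h = (\<lambda>i. if i = 0 then map label c else h' (i - 1))"
    have upt: "[0..<Suc (Suc m')] = 0 # map Suc [0..<Suc m']"
      by (simp add: upt_conv_Cons map_Suc_upt del: upt_Suc)
    have "Suc (a + i) mod n = (b' + i) mod n" for i
      using b' by (simp add: mod_add_left_eq)
    then have "concat (map (\<lambda>i. Bul ((a + i) mod n) # map Box (h i)) [0..<Suc (Suc m')])
       = Bul (a mod n) # map Box (map label c) @ z"
      unfolding upt z by (simp add: h_def comp_def del: upt_Suc)
    also have "\<dots> = x" using less.prems y c by simp
    finally show ?thesis by metis
  qed
qed

text \<open>Rotating the bullet with label \<open>0\<close> to the front brings every configuration
  into standard form.\<close>

lemma Omega_rotate_std_word:
  assumes "w \<in> Omega L n" "1 \<le> n"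
  obtains c g where "admissible n L g" "w = rotate c (std_word n g)"
proof -
  have O: "length w = L" "\<forall>k<n. length (filter (\<lambda>x. x = Bul k) w) = 1"
    using assms(1) unfolding Omega_iff by auto
  then have "filter (\<lambda>x. x = Bul 0) w \<noteq> []" using assms(2) by fastforce
  then have "Bul 0 \<in> set w" by (auto simp: filter_empty_conv)
  then obtain j0 where j0: "j0 < L" "w ! j0 = Bul 0" using O(1) by (auto simp: in_set_conv_nth)
  define w' where "w' = rotate j0 w"
  have "w' \<in> Omega L n" unfolding w'_def using assms(1) by (rule Omega_rotate)
  then have O': "length w' = L" "\<forall>x\<in>set w'. label x < n"
    "\<forall>k<n. length (filter (\<lambda>x. x = Bul k) w') = 1" "cyclically_ordered n w'"
    unfolding Omega_iff by auto
  have "w' ! 0 = Bul 0" using j0 O(1) by (simp add: w'_def nth_rotate)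
  then have "w' = Bul 0 # tl w'" using O'(1) j0 by (cases w') auto
  then obtain m h where mh: "w' = concat (map (\<lambda>i. Bul ((0 + i) mod n) # map Box (h i)) [0..<Suc m])"
    using ordered_bullets_decompose[OF ordered_bullets_of_cyclically_ordered[OF O'(4)], of 0 "tl w'"]
      assms(2) by auto
  have "length (filter is_bul w') = n"
    using length_filter_is_bul[OF O'(2)] O'(3) by simp
  moreover have "length (filter is_bul w') = Suc m"
    unfolding mh by (induction m) (auto simp: filter_empty_conv)
  moreover have "std_word n h = concat (map (\<lambda>i. Bul ((0 + i) mod n) # map Box (h i)) [0..<n])"
    unfolding std_word_def block_def by (intro arg_cong[where f = concat] map_cong) auto
  ultimately have "w' = std_word n h" using mh by simp
  moreover have "admissible n L h" unfolding admissible_def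
  proof
    show "\<forall>k<n. \<forall>x\<in>set (h k). x < n"
    proof (intro allI impI ballI)
      fix k x assume "k < n" "x \<in> set (h k)"
      then have "Box x \<in> set w'" using \<open>w' = std_word n h\<close> set_std_word by blast
      then show "x < n" using O'(2) by fastforce
    qed
    show "length (std_word n h) = L" using \<open>w' = std_word n h\<close> O'(1) by simp
  qed
  moreover have "rotate (L - j0) w' = w" unfolding w'_def rotate_rotate using j0 O(1) by simp
  ultimately show ?thesis using that by blast
qed

section \<open>Transitions and rotations\<close>

lemma Suc_mod_eq_iff: "i < L \<Longrightarrow> a < L \<Longrightarrow> (Suc i mod L = Suc a mod L) = (i = a)"
  by (auto simp: mod_Suc split: if_splits)

lemma rotate1_list_update: "a < length w \<Longrightarrow> (rotate1 w)[a := x] = rotate1 (w[Suc a mod length w := x])"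
proof -
  assume a: "a < length w"
  then have "length w > 0" by linarith
  then have "Suc a mod length w < length w" by simp
  then show ?thesis using a by (intro nth_equalityI) (auto simp: nth_rotate1 nth_list_update Suc_mod_eq_iff)
qed

lemma rate_T1_rotate1:
  assumes "w \<noteq> []"
  shows "rate_T1 n p (rotate1 w) (rotate1 w') j = rate_T1 n p w w' (Suc j mod length w)"
proof -
  let ?L = "length w"
  have L: "?L > 0" using assms by simp
  have a: "wat (rotate1 w) j = wat w (Suc j mod ?L)" using assms by (simp add: wat_rotate1_mod)
  have b: "wat (rotate1 w) (j+1) = wat w (Suc j mod ?L + 1)"
    using assms by (simp add: wat_rotate1) (simp add: wat_def mod_Suc_eq)
  have c: "(rotate1 w' = (rotate1 w)[j mod ?L := A, (j+1) mod ?L := B]) =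
           (w' = w[(Suc j mod ?L) mod ?L := A, (Suc j mod ?L + 1) mod ?L := B])" for A B
  proof -
    have "(rotate1 w)[j mod ?L := A, (j+1) mod ?L := B]
        = rotate1 ((w[Suc (j mod ?L) mod ?L := A])[Suc ((j+1) mod ?L) mod ?L := B])"
      using L by (simp add: rotate1_list_update)
    also have "Suc (j mod ?L) mod ?L = (Suc j mod ?L) mod ?L" by (simp add: mod_Suc_eq)
    also have "Suc ((j+1) mod ?L) mod ?L = (Suc j mod ?L + 1) mod ?L" by (simp add: mod_Suc_eq)
    finally show ?thesis by (simp add: inj_eq[OF inj_rotate1])
  qed
  show ?thesis unfolding rate_T1_def Let_def length_rotate1 a b c ..
qed

lemma Least_cong_bounded:
  fixes B :: nat
  assumes "P B" "P' B" "\<And>m. m \<le> B \<Longrightarrow> P m = P' m" shows "Least P = Least P'"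
proof -
  have a: "Least P \<le> B" using assms(1) by (rule Least_le)
  have Pa: "P (Least P)" using assms(1) by (rule LeastI)
  show ?thesis
  proof (rule Least_equality[symmetric])
    show "P' (Least P)" using Pa a assms(3) by blast
    fix m assume "P' m"
    show "Least P \<le> m"
    proof (cases "m \<le> B")
      case True then have "P m" using \<open>P' m\<close> assms(3) by blast
      then show ?thesis by (rule Least_le)
    next
      case False then show ?thesis using a by simp
    qed
  qed
qed

lemma wat_rotate1_back:
  assumes "w \<noteq> []" "m \<le> length w"
  shows "wat (rotate1 w) (j + length w - m) = wat w (Suc j mod length w + length w - m)"
proof -
  let ?L = "length w"
  have e1: "j + ?L - m = j + (?L - m)" using assms by simp
  have e2: "Suc j mod ?L + ?L - m = Suc j mod ?L + (?L - m)" using assms by simp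
  show ?thesis unfolding e1 e2 using assms(1)
    by (simp add: wat_rotate1) (simp add: wat_def mod_add_left_eq)
qed

lemma prev_dist_le: "w \<noteq> [] \<Longrightarrow> is_bul (wat w j) \<Longrightarrow> prev_dist w j \<le> length w"
  unfolding prev_dist_def by (rule Least_le) (simp add: Suc_leI)

lemma prev_dist_rotate1:
  assumes "w \<noteq> []" "is_bul (wat w (Suc j))"
  shows "prev_dist (rotate1 w) j = prev_dist w (Suc j mod length w)"
  unfolding prev_dist_def length_rotate1
proof (rule Least_cong_bounded[where B="length w"])
  show "1 \<le> length w \<and> is_bul (wat (rotate1 w) (j + length w - length w))"
    using assms by (simp add: wat_rotate1 Suc_leI)
  show "1 \<le> length w \<and> is_bul (wat w (Suc j mod length w + length w - length w))"
    using assms by (simp add: wat_def Suc_leI)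
  fix m assume "m \<le> length w"
  then show "(1 \<le> m \<and> is_bul (wat (rotate1 w) (j + length w - m))) =
             (1 \<le> m \<and> is_bul (wat w (Suc j mod length w + length w - m)))"
    using assms wat_rotate1_back by simp
qed

lemma back_offset_rotate1:
  assumes "x < L"
  shows "(Suc j mod L + 1 + L - Suc x mod L) mod L = (j + 1 + L - x) mod L"
proof (cases "Suc x < L")
  case True
  then have e1: "Suc j mod L + 1 + L - Suc x mod L = Suc j mod L + (L - x)" by simp
  have e2: "j + 1 + L - x = Suc j + (L - x)" using assms by simp
  show ?thesis unfolding e1 e2 by (rule mod_add_left_eq)
next
  case False
  then have x: "Suc x = L" using assms by simp
  then have e1: "Suc j mod L + 1 + L - Suc x mod L = (Suc j mod L + 1) + L" by simp
  have e2: "j + 1 + L - x = Suc j + 1" using x by simp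
  show ?thesis unfolding e1 e2 by (simp only: mod_add_self2 mod_add_left_eq)
qed

lemma t2_res_rotate1:
  assumes "w \<noteq> []"
  shows "t2_res n (rotate1 w) j m k = rotate1 (t2_res n w (Suc j mod length w) m k)"
proof (rule nth_equalityI)
  let ?L = "length w"
  show "length (t2_res n (rotate1 w) j m k) = length (rotate1 (t2_res n w (Suc j mod length w) m k))"
    by (simp add: t2_res_def Let_def)
  fix x assume "x < length (t2_res n (rotate1 w) j m k)"
  then have x: "x < ?L" by (simp add: t2_res_def Let_def)
  have L0: "?L > 0" using x by linarith
  have sx: "Suc x mod ?L < ?L" using L0 by simp
  have w1: "wat (rotate1 w) (x + ?L - 1) = wat w (Suc x mod ?L + ?L - 1)"
  proof -
    have "x + ?L - 1 = x + (?L - 1)" "Suc x mod ?L + ?L - 1 = Suc x mod ?L + (?L - 1)" using x by auto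
    then show ?thesis using assms by (simp add: wat_rotate1) (simp add: wat_def mod_add_left_eq)
  qed
  have "t2_res n (rotate1 w) j m k ! x = (let r = (j + 1 + ?L - x) mod ?L in
       if r = 0 then Bul k
       else if r < m then wat (rotate1 w) (x + ?L - 1)
       else if r = m then Box ((k + n - 1) mod n)
       else rotate1 w ! x)" using x by (simp add: t2_res_def Let_def)
  also have "\<dots> = (let r = (Suc j mod ?L + 1 + ?L - Suc x mod ?L) mod ?L in
       if r = 0 then Bul k
       else if r < m then wat w (Suc x mod ?L + ?L - 1)
       else if r = m then Box ((k + n - 1) mod n)
       else w ! (Suc x mod ?L))"
    unfolding back_offset_rotate1[OF x] w1 using x by (simp add: nth_rotate1 Let_def)
  also have "\<dots> = t2_res n w (Suc j mod ?L) m k ! (Suc x mod ?L)"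
    using sx by (simp add: t2_res_def Let_def)
  also have "\<dots> = rotate1 (t2_res n w (Suc j mod length w) m k) ! x"
  proof -
    have "length (t2_res n w (Suc j mod length w) m k) = ?L" by (simp add: t2_res_def Let_def)
    then show ?thesis using x by (simp add: nth_rotate1)
  qed
  finally show "t2_res n (rotate1 w) j m k ! x = rotate1 (t2_res n w (Suc j mod length w) m k) ! x" .
qed

lemma rate_T2_rotate1:
  assumes "w \<noteq> []"
  shows "rate_T2 n p (rotate1 w) (rotate1 w') j = rate_T2 n p w w' (Suc j mod length w)"
proof -
  let ?L = "length w"
  have a: "wat (rotate1 w) j = wat w (Suc j mod ?L)" using assms by (simp add: wat_rotate1_mod)
  have b: "wat (rotate1 w) (j+1) = wat w (Suc j mod ?L + 1)"
    using assms by (simp add: wat_rotate1) (simp add: wat_def mod_Suc_eq)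
  show ?thesis
  proof (cases "is_bul (wat w (Suc j))")
    case False
    then have "\<not> is_bul (wat w (Suc j mod ?L))" by (simp add: wat_def)
    then show ?thesis unfolding rate_T2_def Let_def length_rotate1 a b
      by (cases "wat w (Suc j mod ?L)") auto
  next
    case True
    define m where "m = prev_dist w (Suc j mod ?L)"
    have pd: "prev_dist (rotate1 w) j = m" unfolding m_def using assms True by (rule prev_dist_rotate1)
    have mL: "m \<le> ?L" unfolding m_def using assms True by (intro prev_dist_le) (simp_all add: wat_def)
    have wm: "wat (rotate1 w) (j + ?L - m) = wat w (Suc j mod ?L + ?L - m)"
      using assms mL by (rule wat_rotate1_back)
    have c: "(rotate1 w' = t2_res n (rotate1 w) j m k) = (w' = t2_res n w (Suc j mod ?L) m k)" for k
      using assms by (simp add: t2_res_rotate1 inj_eq[OF inj_rotate1])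
    show ?thesis unfolding rate_T2_def Let_def length_rotate1 pd a b wm c m_def[symmetric] ..
  qed
qed

lemma rate_T3_rotate1:
  assumes "w \<noteq> []"
  shows "rate_T3 n p (rotate1 w) (rotate1 w') j = rate_T3 n p w w' (Suc j mod length w)"
proof -
  let ?L = "length w"
  have L: "?L > 0" using assms by simp
  have a: "wat (rotate1 w) j = wat w (Suc j mod ?L)" using assms by (simp add: wat_rotate1_mod)
  have b: "wat (rotate1 w) (j + ?L - 1) = wat w (Suc j mod ?L + ?L - 1)"
  proof -
    have "j + ?L - 1 = j + (?L - 1)" "Suc j mod ?L + ?L - 1 = Suc j mod ?L + (?L - 1)" using L by (simp_all del: length_greater_0_conv)
    then show ?thesis using assms by (simp add: wat_rotate1) (simp add: wat_def mod_add_left_eq)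
  qed
  have c: "(rotate1 w' = (rotate1 w)[j mod ?L := A, (j + ?L - 1) mod ?L := B]) =
           (w' = w[(Suc j mod ?L) mod ?L := A, (Suc j mod ?L + ?L - 1) mod ?L := B])" for A B
  proof -
    have "(rotate1 w)[j mod ?L := A, (j + ?L - 1) mod ?L := B]
        = rotate1 ((w[Suc (j mod ?L) mod ?L := A])[Suc ((j + ?L - 1) mod ?L) mod ?L := B])"
      using L by (simp add: rotate1_list_update)
    also have "Suc (j mod ?L) mod ?L = (Suc j mod ?L) mod ?L" by (simp add: mod_Suc_eq)
    also have "Suc ((j + ?L - 1) mod ?L) mod ?L = (Suc j mod ?L + ?L - 1) mod ?L"
    proof -
      have "Suc ((j + ?L - 1) mod ?L) mod ?L = Suc (j + ?L - 1) mod ?L" by (simp add: mod_Suc_eq)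
      also have "Suc (j + ?L - 1) = Suc j + (?L - 1)" using L by simp
      also have "(Suc j + (?L - 1)) mod ?L = (Suc j mod ?L + (?L - 1)) mod ?L" by (simp add: mod_add_left_eq)
      also have "Suc j mod ?L + (?L - 1) = Suc j mod ?L + ?L - 1" using L by arith
      finally show ?thesis .
    qed
    finally show ?thesis by (simp add: inj_eq[OF inj_rotate1])
  qed
  show ?thesis unfolding rate_T3_def Let_def length_rotate1 a b c ..
qed

definition step :: "nat \<Rightarrow> (nat \<Rightarrow> real) \<Rightarrow> (nat \<Rightarrow> real) \<Rightarrow> letter list \<Rightarrow> letter list \<Rightarrow> bool" where
  "step n p q w w' \<longleftrightarrow> (\<exists>j<length w. rate_T1 n p w w' j > 0 \<or> rate_T2 n p w w' j > 0 \<or> rate_T3 n q w w' j > 0)"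

lemma Suc_pred_mod: "j < L \<Longrightarrow> Suc ((j + L - 1) mod L) mod L = j"
proof -
  assume j: "j < L"
  have "Suc ((j + L - 1) mod L) mod L = Suc (j + L - 1) mod L" by (simp add: mod_Suc_eq)
  also have "Suc (j + L - 1) = j + L" using j by simp
  finally show ?thesis using j by simp
qed

lemma step_rotate1:
  assumes "step n p q w w'" "w \<noteq> []"
  shows "step n p q (rotate1 w) (rotate1 w')"
proof -
  let ?L = "length w"
  obtain j where j: "j < ?L" "rate_T1 n p w w' j > 0 \<or> rate_T2 n p w w' j > 0 \<or> rate_T3 n q w w' j > 0"
    using assms(1) unfolding step_def by blast
  define j' where "j' = (j + ?L - 1) mod ?L"
  have j': "j' < ?L" using assms(2) by (simp add: j'_def)
  have j'': "Suc j' mod ?L = j" unfolding j'_def using Suc_pred_mod[OF j(1)] .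
  show ?thesis unfolding step_def
    using j j' j'' assms(2) by (auto simp: rate_T1_rotate1 rate_T2_rotate1 rate_T3_rotate1 intro!: exI[of _ j'])
qed

lemma rates_nonneg:
  assumes pq: "\<forall>k<n. p k > 0 \<and> q k > 0" and "\<forall>x\<in>set w. label x < n" "w \<noteq> []"
  shows "0 \<le> rate_T1 n p w w' j" "0 \<le> rate_T2 n p w w' j" "0 \<le> rate_T3 n q w w' j"
    "0 \<le> rate_T4 n q w w' j"
proof -
  have lt: "wat w j = Bul k \<Longrightarrow> k < n" for k
    using assms(2,3) wat_in_set[of w j] by fastforce
  show "0 \<le> rate_T1 n p w w' j" unfolding rate_T1_def Let_def
    using lt pq by (auto split: letter.splits simp: less_imp_le)
  show "0 \<le> rate_T2 n p w w' j" unfolding rate_T2_def Let_def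
    using lt pq by (auto split: letter.splits simp: less_imp_le)
  show "0 \<le> rate_T3 n q w w' j" unfolding rate_T3_def Let_def
    using lt pq by (auto split: letter.splits simp: less_imp_le)
  show "0 \<le> rate_T4 n q w w' j" unfolding rate_T4_def Let_def
    using lt pq by (auto split: letter.splits simp: less_imp_le)
qed

lemma Q_rate_pos_of_step:
  assumes "\<forall>k<n. p k > 0 \<and> q k > 0" "step n p q w w'" "\<forall>x\<in>set w. label x < n" "w \<noteq> []"
  shows "Q_rate n p q w w' > 0"
proof -
  define f where "f i = rate_T1 n p w w' i + rate_T2 n p w w' i + rate_T3 n q w w' i + rate_T4 n q w w' i"
    for i
  obtain j where j: "j < length w" "rate_T1 n p w w' j > 0 \<or> rate_T2 n p w w' j > 0 \<or> rate_T3 n q w w' j > 0"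
    using assms(2) unfolding step_def by blast
  note nonneg = rates_nonneg[OF assms(1,3,4)]
  have "0 < f j" using j(2) nonneg[of w' j] unfolding f_def by linarith
  moreover have "\<forall>i\<in>{..<length w}. 0 \<le> f i" using nonneg unfolding f_def by simp
  ultimately have "0 < sum f {..<length w}" using j(1) by (intro sum_pos2) auto
  then show ?thesis by (simp add: Q_rate_def f_def)
qed

lemma back_offset_small:
  fixes x a L :: nat
  shows "x \<le> a \<Longrightarrow> a < L \<Longrightarrow> (a + L - x) mod L = a - x"
proof -
  assume "x \<le> a" "a < L"
  then have e: "a + L - x = (a - x) + L" by arith
  have "(a + L - x) mod L = ((a - x) + L) mod L" unfolding e ..
  also have "\<dots> = (a - x) mod L" by (rule mod_add_self2)
  also have "\<dots> = a - x" using \<open>a < L\<close> by (intro mod_less) arith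
  finally show ?thesis .
qed

lemma back_offset_large:
  fixes x a L :: nat
  shows "a < x \<Longrightarrow> x < L \<Longrightarrow> (a + L - x) mod L = a + L - x"
  by (intro mod_less) arith

lemma t2_res_local:
  fixes u v :: "letter list" and c :: "nat list"
  assumes w: "w = u @ [Bul k'] @ map Box c @ [Bul k, Box k] @ v"
    and j: "j = length u + 1 + length c" and m: "m = length c + 1"
  shows "t2_res n w j m k = u @ [Bul k', Box ((k + n - 1) mod n)] @ map Box c @ [Bul k] @ v"
proof (rule nth_equalityI)
  let ?L = "length w"
  have L: "?L = length u + length c + 3 + length v" using w by simp
  show "length (t2_res n w j m k) = length (u @ [Bul k', Box ((k + n - 1) mod n)] @ map Box c @ [Bul k] @ v)"
    using L by (simp add: t2_res_def Let_def)
  fix x assume "x < length (t2_res n w j m k)"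
  then have x: "x < ?L" by (simp add: t2_res_def Let_def)
  have T: "t2_res n w j m k ! x = (let r = (j + 1 + ?L - x) mod ?L in
       if r = 0 then Bul k
       else if r < m then wat w (x + ?L - 1)
       else if r = m then Box ((k + n - 1) mod n)
       else w ! x)" using x by (simp add: t2_res_def Let_def)
  have jL: "j + 1 < ?L" using L j by simp
  consider (prefix) "x \<le> length u" | (new_box) "x = length u + 1"
    | (gap) "length u + 2 \<le> x" "x \<le> j" | (bullet) "x = j + 1" | (suffix) "j + 1 < x"
    using j by linarith
  then show "t2_res n w j m k ! x = (u @ [Bul k', Box ((k + n - 1) mod n)] @ map Box c @ [Bul k] @ v) ! x"
  proof cases
    case prefix
    have "(j + 1 + ?L - x) mod ?L = j + 1 - x" using prefix jL j by (intro back_offset_small) auto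
    moreover have "j + 1 - x \<noteq> 0" "\<not> j + 1 - x < m" "j + 1 - x \<noteq> m" using prefix j m by auto
    ultimately show ?thesis unfolding T using prefix w by (simp add: nth_append)
  next
    case new_box
    have "(j + 1 + ?L - x) mod ?L = j + 1 - x" using new_box jL j by (intro back_offset_small) auto
    moreover have "j + 1 - x \<noteq> 0" "\<not> j + 1 - x < m" "j + 1 - x = m" using new_box j m by auto
    ultimately show ?thesis unfolding T using new_box by (simp add: nth_append)
  next
    case gap
    have r: "(j + 1 + ?L - x) mod ?L = j + 1 - x" using gap jL j by (intro back_offset_small) auto
    have wp: "wat w (x + ?L - 1) = w ! (x - 1)" using gap x by (intro wat_pred) auto
    define i where "i = x - length u - 2"
    have i: "x = length u + 2 + i" "i < length c" using gap j unfolding i_def by arith+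
    have "w ! (x - 1) = Box (c ! i)" using i w by (simp add: nth_append)
    moreover have "(u @ [Bul k', Box ((k + n - 1) mod n)] @ map Box c @ [Bul k] @ v) ! x = Box (c ! i)"
      using i by (simp add: nth_append)
    moreover have "j + 1 - x \<noteq> 0" "j + 1 - x < m" using gap j m by auto
    ultimately show ?thesis unfolding T r wp by simp
  next
    case bullet
    have "(j + 1 + ?L - x) mod ?L = 0" using bullet jL by simp
    moreover have "x = length u + 2 + length c" using bullet j by simp
    ultimately show ?thesis unfolding T by (simp add: nth_append)
  next
    case suffix
    have "(j + 1 + ?L - x) mod ?L = j + 1 + ?L - x" using suffix x by (intro back_offset_large) auto
    moreover have "j + 1 + ?L - x \<noteq> 0" "\<not> j + 1 + ?L - x < m" "j + 1 + ?L - x \<noteq> m" using suffix j m x L by auto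
    ultimately show ?thesis unfolding T using suffix j w by (simp add: nth_append)
  qed
qed



lemma step_T1:
  assumes w: "w = u @ [Bul k, Box l] @ v" and "l \<noteq> k" "p k > 0"
  shows "step n p q w (u @ [Box l, Bul k] @ v)"
proof -
  let ?j = "length u" and ?L = "length w"
  have jL: "?j + 1 < ?L" by (simp add: w)
  have a: "wat w ?j = Bul k" "wat w (?j+1) = Box l" using jL by (simp_all add: wat_lt w nth_append)
  have b: "w[?j mod ?L := Box l, (?j+1) mod ?L := Bul k] = u @ [Box l, Bul k] @ v"
    using jL by (simp add: w list_update_append)
  have "rate_T1 n p w (u @ [Box l, Bul k] @ v) ?j = p k"
    unfolding rate_T1_def Let_def a using b assms(2) by simp
  then show ?thesis unfolding step_def using jL assms(3) by (intro exI[of _ ?j]) auto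
qed

lemma step_T3:
  assumes w: "w = u @ [Box l, Bul k] @ v" and "l \<noteq> k" "q k > 0"
  shows "step n p q w (u @ [Bul k, Box l] @ v)"
proof -
  let ?j = "length u + 1" and ?L = "length w"
  have jL: "?j < ?L" by (simp add: w)
  have a1: "wat w ?j = Bul k" using jL by (simp add: wat_lt w nth_append)
  have a2: "wat w (?j + ?L - 1) = Box l" using jL by (subst wat_pred) (auto simp: w nth_append)
  have m: "(?j + ?L - 1) mod ?L = length u"
  proof -
    have "?j + ?L - 1 = length u + ?L" by simp
    then show ?thesis using jL by simp
  qed
  have b: "w[?j mod ?L := Box l, (?j + ?L - 1) mod ?L := Bul k] = u @ [Bul k, Box l] @ v"
    unfolding m using jL by (simp add: w list_update_append)
  have "rate_T3 n q w (u @ [Bul k, Box l] @ v) ?j = q k"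
    unfolding rate_T3_def Let_def a1 a2 using b assms(2) by simp
  then show ?thesis unfolding step_def using jL assms(3) by (intro exI[of _ ?j]) auto
qed

lemma prev_dist_local:
  fixes u v :: "letter list" and c :: "nat list"
  assumes w: "w = u @ [Bul k'] @ map Box c @ [Bul k, Box k] @ v"
  shows "prev_dist w (length u + 1 + length c) = length c + 1"
  unfolding prev_dist_def
proof (rule Least_equality)
  let ?j = "length u + 1 + length c" and ?L = "length w"
  have e: "?j + ?L - (length c + 1) = length u + ?L" by simp
  have "length u < ?L" by (simp add: w)
  then have "wat w (length u + ?L) = w ! length u" by (simp add: wat_def)
  then show "1 \<le> length c + 1 \<and> is_bul (wat w (?j + ?L - (length c + 1)))"
    unfolding e by (simp add: w nth_append)
  fix m assume P: "1 \<le> m \<and> is_bul (wat w (?j + ?L - m))"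
  show "length c + 1 \<le> m"
  proof (rule ccontr)
    assume "\<not> length c + 1 \<le> m"
    then have m: "m \<le> length c" "1 \<le> m" using P by auto
    have e2: "?j + ?L - m = (?j - m) + ?L" using m by simp
    have jl: "?j - m < ?L" by (simp add: w)
    have "wat w (?j + ?L - m) = w ! (?j - m)" unfolding e2 wat_def using jl by simp
    also have "?j - m = length u + 1 + (length c - m)" using m by simp
    also have "w ! (length u + 1 + (length c - m)) = Box (c ! (length c - m))"
    proof -
      define i where "i = length c - m"
      have "i < length c" using m unfolding i_def by arith
      then show ?thesis unfolding i_def[symmetric] by (simp add: w nth_append)
    qed
    finally show False using P by simp
  qed
qed

lemma step_T2:
  fixes u v :: "letter list" and c :: "nat list"
  assumes w: "w = u @ [Bul ((k + n - 1) mod n)] @ map Box c @ [Bul k, Box k] @ v" and "p k > 0"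
  shows "step n p q w (u @ [Bul ((k + n - 1) mod n), Box ((k + n - 1) mod n)] @ map Box c @ [Bul k] @ v)"
proof -
  let ?j = "length u + 1 + length c" and ?L = "length w"
  let ?w' = "u @ [Bul ((k + n - 1) mod n), Box ((k + n - 1) mod n)] @ map Box c @ [Bul k] @ v"
  have jL: "?j + 1 < ?L" by (simp add: w)
  have a: "wat w ?j = Bul k" "wat w (?j+1) = Box k" using jL by (simp_all add: wat_lt w nth_append)
  have pd: "prev_dist w ?j = length c + 1" using w by (rule prev_dist_local)
  have e: "?j + ?L - (length c + 1) = length u + ?L" by simp
  have "length u < ?L" by (simp add: w)
  then have "wat w (length u + ?L) = w ! length u" by (simp add: wat_def)
  then have b: "wat w (?j + ?L - (length c + 1)) = Bul ((k + n - 1) mod n)"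
    unfolding e by (simp add: w nth_append)
  have t: "t2_res n w ?j (length c + 1) k = ?w'" using w by (intro t2_res_local) auto
  have "rate_T2 n p w ?w' ?j = p k"
    unfolding rate_T2_def Let_def a pd b using t by simp
  then show ?thesis unfolding step_def using jL assms(2) by (intro exI[of _ ?j]) auto
qed


lemma T2_changes_word: "u @ [Bul a] @ map Box c @ [Bul k, Box k] @ v \<noteq> u @ [Bul a, Box a] @ map Box c @ [Bul k] @ v"
proof
  assume H: "u @ [Bul a] @ map Box c @ [Bul k, Box k] @ v = u @ [Bul a, Box a] @ map Box c @ [Bul k] @ v"
  let ?N = "length u + 2 + length c"
  have "length (filter is_bul (take ?N (u @ [Bul a] @ map Box c @ [Bul k, Box k] @ v))) = length (filter is_bul u) + 2"
    by (simp add: filter_empty_conv)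
  moreover have "length (filter is_bul (take ?N (u @ [Bul a, Box a] @ map Box c @ [Bul k] @ v))) = length (filter is_bul u) + 1"
    by (simp add: filter_empty_conv)
  ultimately show False using H by simp
qed

lemma t2_res_whole_ring:
  assumes "2 \<le> length w" "w ! 0 = Bul k"
  shows "t2_res n w 0 (length w) k = rotate (length w - 1) w"
proof (rule nth_equalityI)
  let ?L = "length w"
  show "length (t2_res n w 0 ?L k) = length (rotate (?L - 1) w)" by (simp add: t2_res_def Let_def)
  fix x assume "x < length (t2_res n w 0 ?L k)"
  then have x: "x < ?L" by (simp add: t2_res_def Let_def)
  have T: "t2_res n w 0 ?L k ! x = (let r = (0 + 1 + ?L - x) mod ?L in
       if r = 0 then Bul k
       else if r < ?L then wat w (x + ?L - 1)
       else if r = ?L then Box ((k + n - 1) mod n)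
       else w ! x)" using x by (simp add: t2_res_def Let_def)
  have R: "rotate (?L - 1) w ! x = w ! ((?L - 1 + x) mod ?L)" using x by (simp add: nth_rotate)
  show "t2_res n w 0 ?L k ! x = rotate (?L - 1) w ! x"
  proof (cases "x = 1")
    case True
    have "(0 + 1 + ?L - x) mod ?L = 0" using True by simp
    moreover have "?L - 1 + x = ?L" using True assms(1) by simp
    then have "(?L - 1 + x) mod ?L = 0" by simp
    ultimately show ?thesis unfolding T R using assms(2) by simp
  next
    case False
    have r0: "(0 + 1 + ?L - x) mod ?L \<noteq> 0"
    proof (cases "x = 0")
      case True
      have e: "0 + 1 + ?L - x = 1 + ?L" using True by simp
      have "(1 + ?L) mod ?L = 1 mod ?L" by (rule mod_add_self2)
      also have "\<dots> = 1" using assms(1) by simp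
      finally show ?thesis unfolding e by simp
    next
      case False
      then have "0 < 1 + ?L - x" "1 + ?L - x < ?L" using \<open>x \<noteq> 1\<close> x by auto
      then show ?thesis by simp
    qed
    have L0: "0 < ?L" using x by linarith
    have rl: "(0 + 1 + ?L - x) mod ?L < ?L" using L0 by (rule mod_less_divisor)
    have "wat w (x + ?L - 1) = w ! ((?L - 1 + x) mod ?L)"
      unfolding wat_def using x by (simp add: add.commute)
    then show ?thesis unfolding T R using r0 rl by simp
  qed
qed


locale ring_chain =
  fixes n L :: nat and p q :: "nat \<Rightarrow> real"
  assumes n_pos: "1 \<le> n" and n_less_L: "n < L" and rates_pos: "\<forall>k<n. p k > 0 \<and> q k > 0"
begin

definition moves :: "(letter list \<times> letter list) set" where
  "moves = {(a, b). a \<in> Omega L n \<and> b \<in> Omega L n \<and> a \<noteq> b \<and> step n p q a b}"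

lemma L_pos: "1 \<le> L"
  using n_pos n_less_L by simp

lemma p_pos: "k < n \<Longrightarrow> p k > 0"
  using rates_pos by blast

lemma q_pos: "k < n \<Longrightarrow> q k > 0"
  using rates_pos by blast

lemma Omega_nonempty: "w \<in> Omega L n \<Longrightarrow> w \<noteq> []"
  using L_pos by (auto simp: Omega_iff)

lemma moves_subset_Q_rate:
  "moves \<subseteq> {(a, b). a \<in> Omega L n \<and> b \<in> Omega L n \<and> a \<noteq> b \<and> Q_rate n p q a b > 0}"
  unfolding moves_def using Q_rate_pos_of_step[OF rates_pos] Omega_nonempty
  by (auto simp: Omega_iff)

lemma step_in_moves:
  "a \<in> Omega L n \<Longrightarrow> b \<in> Omega L n \<Longrightarrow> a \<noteq> b \<Longrightarrow> step n p q a b \<Longrightarrow> (a, b) \<in> moves\<^sup>*"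
  unfolding moves_def by auto

lemma moves_rotate1: "(a, b) \<in> moves \<Longrightarrow> (rotate1 a, rotate1 b) \<in> moves"
  unfolding moves_def using Omega_rotate1 step_rotate1 Omega_nonempty by (auto simp: inj_eq[OF inj_rotate1])

lemma reachable_rotate1: "(a, b) \<in> moves\<^sup>* \<Longrightarrow> (rotate1 a, rotate1 b) \<in> moves\<^sup>*"
  by (induction rule: rtrancl_induct) (auto intro: rtrancl_into_rtrancl moves_rotate1)

lemma reachable_rotate: "(a, b) \<in> moves\<^sup>* \<Longrightarrow> (rotate c a, rotate c b) \<in> moves\<^sup>*"
  by (induction c) (auto simp: reachable_rotate1)

text \<open>Rotating by \<open>L - 1\<close> sites is one site backwards; iterating it walks through all
  rotations.\<close>

lemma rotations_reachable:
  assumes "(x, rotate (L - 1) x) \<in> moves\<^sup>*" "length x = L"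
  shows "(rotate a x, rotate b x) \<in> moves\<^sup>*"
proof -
  have backwards: "(rotate (c + t) x, rotate c x) \<in> moves\<^sup>*" for c t
  proof (induction t)
    case (Suc t)
    have "c + Suc t + (L - 1) = (c + t) + L" using L_pos by simp
    then have "rotate (c + Suc t) (rotate (L - 1) x) = rotate (c + t) x"
      using assms(2) rotate_conv_mod[of "c + t + L" x] rotate_conv_mod[of "c + t" x]
      by (simp add: rotate_rotate)
    then have "(rotate (c + Suc t) x, rotate (c + t) x) \<in> moves\<^sup>*"
      using reachable_rotate[OF assms(1), of "c + Suc t"] by simp
    then show ?case using Suc.IH by (rule rtrancl_trans)
  qed simp
  define t where "t = a mod L + L - b mod L"
  have "b mod L < L" using L_pos by simp
  then have "b mod L + t = a mod L + L" unfolding t_def by simp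
  then have "(b + t) mod L = a mod L" by (metis mod_add_left_eq mod_add_self2)
  then have "rotate a x = rotate (b + t) x"
    using assms(2) rotate_conv_mod[of a x] rotate_conv_mod[of "b + t" x] by simp
  then show ?thesis using backwards[of b t] by simp
qed

definition communicate :: "letter list \<Rightarrow> letter list \<Rightarrow> bool" where
  "communicate x y \<longleftrightarrow> (x, y) \<in> moves\<^sup>* \<and> (y, x) \<in> moves\<^sup>*"

lemma communicate_trans: "communicate x y \<Longrightarrow> communicate y z \<Longrightarrow> communicate x z"
  unfolding communicate_def by (meson rtrancl_trans)

lemma communicate_rotate: "communicate x y \<Longrightarrow> communicate (rotate c x) (rotate c y)"
  unfolding communicate_def by (simp add: reachable_rotate)

lemma communicate_of_steps:
  "a \<in> Omega L n \<Longrightarrow> b \<in> Omega L n \<Longrightarrow> a \<noteq> b \<Longrightarrow> step n p q a b \<Longrightarrow> step n p q b a \<Longrightarrow>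
     communicate a b"
  unfolding communicate_def by (auto intro: step_in_moves)

definition reduces_to :: "(nat \<Rightarrow> nat list) \<Rightarrow> (nat \<Rightarrow> nat list) \<Rightarrow> bool" where
  "reduces_to g h \<longleftrightarrow> admissible n L h \<and> (\<exists>d. communicate (std_word n g) (rotate d (std_word n h)))"

lemma reduces_to_refl: "admissible n L g \<Longrightarrow> reduces_to g g"
  unfolding reduces_to_def communicate_def by (metis rotate0 id_apply rtrancl.rtrancl_refl)

lemma reduces_to_trans:
  assumes "reduces_to g h" "reduces_to h k"
  shows "reduces_to g k"
proof -
  obtain d where d: "communicate (std_word n g) (rotate d (std_word n h))"
    using assms(1) reduces_to_def by blast
  obtain e where e: "communicate (std_word n h) (rotate e (std_word n k))"
    using assms(2) reduces_to_def by blast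
  have "communicate (rotate d (std_word n h)) (rotate (d + e) (std_word n k))"
    using communicate_rotate[OF e, of d] by (simp add: rotate_rotate)
  then show ?thesis using assms(2) communicate_trans[OF d] unfolding reduces_to_def by blast
qed

lemma admissible_update:
  assumes "admissible n L g" "\<forall>x\<in>set A. x < n" "\<forall>x\<in>set B. x < n"
    "length (std_word n (g(a := A, b := B))) = L"
  shows "admissible n L (g(a := A, b := B))"
  using assms unfolding admissible_def by auto

lemma admissible_label: "admissible n L g \<Longrightarrow> k < n \<Longrightarrow> x \<in> set (g k) \<Longrightarrow> x < n"
  unfolding admissible_def by auto

lemma admissible_in_Omega: "admissible n L g \<Longrightarrow> std_word n g \<in> Omega L n"
  using std_word_in_Omega n_pos by blast

end

section \<open>Moving boxes between blocks\<close>

context ring_chain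
begin

definition prev_label :: "nat \<Rightarrow> nat" where
  "prev_label k = (k + n - 1) mod n"

lemma prev_label_pos: "1 \<le> k \<Longrightarrow> k < n \<Longrightarrow> prev_label k = k - 1"
proof -
  assume "1 \<le> k" "k < n"
  then have "k + n - 1 = (k - 1) + n" by simp
  then have "prev_label k = ((k - 1) + n) mod n" unfolding prev_label_def by (simp only:)
  then show ?thesis using \<open>k < n\<close> by simp
qed

lemma prev_label_0: "prev_label 0 = n - 1"
  using n_pos by (simp add: prev_label_def)

lemma prev_label_less: "prev_label k < n"
  using n_pos by (simp add: prev_label_def)

lemma prev_label_neq: "2 \<le> n \<Longrightarrow> k < n \<Longrightarrow> prev_label k \<noteq> k"
  by (cases "k = 0") (auto simp: prev_label_0 prev_label_pos)

lemma prev_label_mod: "1 \<le> a \<Longrightarrow> prev_label (a mod n) = (a - 1) mod n"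
proof -
  assume "1 \<le> a"
  have "a mod n + n - 1 = a mod n + (n - 1)" using n_pos by simp
  then have "prev_label (a mod n) = (a + (n - 1)) mod n"
    unfolding prev_label_def by (simp only: mod_add_left_eq)
  also have "a + (n - 1) = (a - 1) + n" using n_pos \<open>1 \<le> a\<close> by simp
  finally show ?thesis by simp
qed

lemma move_foreign_box_Suc:
  assumes g: "admissible n L g" and k: "Suc k < n" and gk: "g (Suc k) = l # t" and l: "l \<noteq> Suc k"
  shows "reduces_to g (g(k := g k @ [l], Suc k := t))"
proof -
  define h where "h = g(k := g k @ [l], Suc k := t)"
  define T where "T = concat (map (block g) [Suc (Suc k)..<n])"
  define u where "u = std_word k g @ block g k"
  have "std_word (Suc k) g = u" by (simp add: u_def std_word_Suc)
  then have g_split: "std_word n g = u @ [Bul (Suc k), Box l] @ (map Box t @ T)"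
    using std_word_split[OF k, of g] gk by (simp add: block_def T_def)
  have "std_word k h = std_word k g" by (rule std_word_cong) (auto simp: h_def)
  moreover have "block h k = block g k @ [Box l]" by (simp add: h_def block_def)
  ultimately have "std_word (Suc k) h = u @ [Box l]" by (simp add: u_def std_word_Suc)
  moreover have "concat (map (block h) [Suc (Suc k)..<n]) = T"
    unfolding T_def by (rule blocks_cong) (auto simp: h_def)
  ultimately have h_split: "std_word n h = u @ [Box l, Bul (Suc k)] @ (map Box t @ T)"
    using std_word_split[OF k, of h] by (simp add: block_def h_def)
  have "length (std_word n h) = L" using g g_split h_split by (simp add: admissible_def)
  have h: "admissible n L h" unfolding h_def
  proof (rule admissible_update[OF g])
    have "\<forall>x\<in>set (g k). x < n" "\<forall>x\<in>set (g (Suc k)). x < n"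
      using admissible_label[OF g Suc_lessD[OF k]] admissible_label[OF g k] by blast+
    then show "\<forall>x\<in>set (g k @ [l]). x < n" "\<forall>x\<in>set t. x < n" using gk by auto
  qed (use \<open>length (std_word n h) = L\<close> h_def in simp)
  have "std_word n g \<noteq> std_word n h" unfolding g_split h_split by simp
  moreover have "step n p q (std_word n g) (std_word n h)"
    unfolding h_split by (rule step_T1[where p = p, OF g_split l p_pos[OF k]])
  moreover have "step n p q (std_word n h) (std_word n g)"
    unfolding g_split by (rule step_T3[where q = q, OF h_split l q_pos[OF k]])
  ultimately have "communicate (std_word n g) (rotate 0 (std_word n h))"
    using communicate_of_steps admissible_in_Omega[OF g] admissible_in_Omega[OF h] by simp
  then show ?thesis using h unfolding reduces_to_def h_def by blast
qed

lemma move_foreign_box_0: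
  assumes g: "admissible n L g" and n2: "2 \<le> n" and g0: "g 0 = l # t" and l: "l \<noteq> 0"
  shows "reduces_to g (g(n - 1 := g (n - 1) @ [l], 0 := t))"
proof -
  define h where "h = g(n - 1 := g (n - 1) @ [l], 0 := t)"
  define M where "M = concat (map (block g) [1..<n - 1])"
  define Z where "Z = [] @ [Box l, Bul 0] @ (map Box t @ M @ block g (n - 1))"
  have g_split: "std_word n g = [] @ [Bul 0, Box l] @ (map Box t @ M @ block g (n - 1))"
    using std_word_split_first_last[OF n2, of g] g0 by (simp add: block_def M_def)
  have "concat (map (block h) [1..<n - 1]) = M"
    unfolding M_def by (rule blocks_cong) (auto simp: h_def)
  moreover have "block h (n - 1) = block g (n - 1) @ [Box l]" using n2 by (simp add: h_def block_def)
  ultimately have "std_word n h = (Bul 0 # map Box t) @ M @ (block g (n - 1) @ [Box l])"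
    using std_word_split_first_last[OF n2, of h] by (simp add: block_def h_def)
  then have rotate1_Z: "rotate1 Z = std_word n h" unfolding Z_def by simp
  have length_Z: "length Z = L" using g g_split by (simp add: Z_def admissible_def)
  have Z: "Z = rotate (L - 1) (std_word n h)"
  proof -
    have "rotate (L - 1) (std_word n h) = rotate (L - 1) (rotate 1 Z)" using rotate1_Z by simp
    also have "\<dots> = rotate L Z" using L_pos by (simp only: rotate_rotate le_add_diff_inverse2)
    also have "\<dots> = Z" using length_Z by simp
    finally show ?thesis by simp
  qed
  have "length (std_word n h) = L" using length_Z rotate1_Z by (metis length_rotate1)
  have h: "admissible n L h" unfolding h_def
  proof (rule admissible_update[OF g])
    have "\<forall>x\<in>set (g (n - 1)). x < n" "\<forall>x\<in>set (g 0). x < n"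
      using admissible_label[OF g, of "n - 1"] admissible_label[OF g, of 0] n2 by auto
    then show "\<forall>x\<in>set (g (n - 1) @ [l]). x < n" "\<forall>x\<in>set t. x < n" using g0 by auto
  qed (use \<open>length (std_word n h) = L\<close> h_def in simp)
  have "Z \<in> Omega L n" unfolding Z using admissible_in_Omega[OF h] by (rule Omega_rotate)
  moreover have "std_word n g \<noteq> Z" unfolding g_split Z_def by simp
  moreover have "step n p q (std_word n g) Z"
    unfolding Z_def using step_T1[where p = p, OF g_split l p_pos] n2 by simp
  moreover have "step n p q Z (std_word n g)"
    unfolding g_split using step_T3[where q = q, OF Z_def l q_pos] n2 by simp
  ultimately have "communicate (std_word n g) (rotate (L - 1) (std_word n h))"
    using communicate_of_steps admissible_in_Omega[OF g] unfolding Z by simp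
  then show ?thesis using h unfolding reduces_to_def h_def by blast
qed

lemma move_foreign_box:
  assumes "admissible n L g" "2 \<le> n" "k < n" "g k = l # t" "l \<noteq> k"
  shows "reduces_to g (g(prev_label k := g (prev_label k) @ [l], k := t))"
proof (cases k)
  case 0
  then show ?thesis using move_foreign_box_0 assms by (simp add: prev_label_0)
next
  case (Suc k')
  then have "prev_label k = k'" using assms(3) by (simp add: prev_label_pos)
  then show ?thesis using move_foreign_box_Suc assms Suc by simp
qed

lemma move_own_box_Suc:
  assumes g: "admissible n L g" and k: "Suc k < n" and gk: "g (Suc k) = Suc k # t"
  shows "admissible n L (g(k := k # g k, Suc k := t)) \<and>
    (std_word n g, std_word n (g(k := k # g k, Suc k := t))) \<in> moves\<^sup>*"
proof -
  define h where "h = g(k := k # g k, Suc k := t)"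
  define T where "T = concat (map (block g) [Suc (Suc k)..<n])"
  have k_prev: "(Suc k + n - 1) mod n = k" using k by simp
  have g_split: "std_word n g = std_word k g @ [Bul ((Suc k + n - 1) mod n)] @ map Box (g k)
      @ [Bul (Suc k), Box (Suc k)] @ (map Box t @ T)"
    using std_word_split[OF k, of g] gk unfolding k_prev by (simp add: block_def T_def std_word_Suc)
  have "std_word k h = std_word k g" by (rule std_word_cong) (auto simp: h_def)
  moreover have "block h k = [Bul k, Box k] @ map Box (g k)" by (simp add: h_def block_def)
  moreover have "concat (map (block h) [Suc (Suc k)..<n]) = T"
    unfolding T_def by (rule blocks_cong) (auto simp: h_def)
  ultimately have h_split: "std_word n h = std_word k g
      @ [Bul ((Suc k + n - 1) mod n), Box ((Suc k + n - 1) mod n)] @ map Box (g k)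
      @ [Bul (Suc k)] @ (map Box t @ T)"
    using std_word_split[OF k, of h] unfolding k_prev by (simp add: block_def h_def std_word_Suc)
  have "length (std_word n h) = L" using g g_split h_split by (simp add: admissible_def)
  have h: "admissible n L h" unfolding h_def
  proof (rule admissible_update[OF g])
    have "\<forall>x\<in>set (g k). x < n" "\<forall>x\<in>set (g (Suc k)). x < n"
      using admissible_label[OF g Suc_lessD[OF k]] admissible_label[OF g k] by blast+
    then show "\<forall>x\<in>set (k # g k). x < n" "\<forall>x\<in>set t. x < n" using gk k by auto
  qed (use \<open>length (std_word n h) = L\<close> h_def in simp)
  moreover have "(std_word n g, std_word n h) \<in> moves\<^sup>*"
  proof (rule step_in_moves[OF admissible_in_Omega[OF g] admissible_in_Omega[OF h]])
    show "std_word n g \<noteq> std_word n h" unfolding g_split h_split by (rule T2_changes_word)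
    show "step n p q (std_word n g) (std_word n h)"
      unfolding h_split using step_T2[where p = p, OF g_split p_pos[OF k]] by simp
  qed
  ultimately show ?thesis unfolding h_def by blast
qed


lemma move_own_box_0:
  assumes g: "admissible n L g" and n2: "2 \<le> n" and g0: "g 0 = 0 # t"
  shows "admissible n L (g(n - 1 := (n - 1) # g (n - 1), 0 := t)) \<and>
    (std_word n g, rotate (L - 1) (std_word n (g(n - 1 := (n - 1) # g (n - 1), 0 := t)))) \<in> moves\<^sup>*"
proof -
  define h where "h = g(n - 1 := (n - 1) # g (n - 1), 0 := t)"
  define M where "M = concat (map (block g) [1..<n - 1])"
  define X where "X = [Bul 0, Box 0] @ map Box t @ M"
  define X' where "X' = Bul 0 # map Box t @ M"
  have last: "(0 + n - 1) mod n = n - 1" using n2 by simp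
  have g_split: "std_word n g = X @ block g (n - 1)"
    using std_word_split_first_last[OF n2, of g] g0 by (simp add: block_def M_def X_def)
  have "concat (map (block h) [1..<n - 1]) = M"
    unfolding M_def by (rule blocks_cong) (auto simp: h_def)
  then have h_split: "std_word n h = X' @ block h (n - 1)"
    using std_word_split_first_last[OF n2, of h] by (simp add: block_def h_def X'_def)
  have block_h: "block h (n - 1) = Bul (n - 1) # Box (n - 1) # map Box (g (n - 1))"
    using n2 by (simp add: h_def block_def)
  have length_X: "length X = Suc (length X')" by (simp add: X_def X'_def)
  have length_g: "length (std_word n g) = L" using g by (simp add: admissible_def)
  then have "length (std_word n h) = L" using g_split h_split length_X block_h by (simp add: block_def)
  have h: "admissible n L h" unfolding h_def
  proof (rule admissible_update[OF g])
    have "\<forall>x\<in>set (g (n - 1)). x < n" "\<forall>x\<in>set (g 0). x < n"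
      using admissible_label[OF g, of "n - 1"] admissible_label[OF g, of 0] n2 by auto
    then show "\<forall>x\<in>set ((n - 1) # g (n - 1)). x < n" "\<forall>x\<in>set t. x < n" using g0 n2 by auto
  qed (use \<open>length (std_word n h) = L\<close> h_def in simp)
  \<comment> \<open>Cut the ring in front of the last bullet, so that the (T2) move happens inside the word.\<close>
  have g_rot: "rotate (length X) (std_word n g) = [] @ [Bul ((0 + n - 1) mod n)] @ map Box (g (n - 1))
      @ [Bul 0, Box 0] @ (map Box t @ M)"
    unfolding g_split rotate_append unfolding last by (simp add: block_def X_def)
  have h_rot: "rotate (length X') (std_word n h) = [] @ [Bul ((0 + n - 1) mod n), Box ((0 + n - 1) mod n)]
      @ map Box (g (n - 1)) @ [Bul 0] @ (map Box t @ M)"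
    unfolding h_split rotate_append block_h unfolding last by (simp add: X'_def)
  have "(rotate (length X) (std_word n g), rotate (length X') (std_word n h)) \<in> moves\<^sup>*"
  proof (rule step_in_moves)
    show "rotate (length X) (std_word n g) \<in> Omega L n" "rotate (length X') (std_word n h) \<in> Omega L n"
      using admissible_in_Omega[OF g] admissible_in_Omega[OF h] by (simp_all add: Omega_rotate)
    show "rotate (length X) (std_word n g) \<noteq> rotate (length X') (std_word n h)"
      unfolding g_rot h_rot by (rule T2_changes_word)
    show "step n p q (rotate (length X) (std_word n g)) (rotate (length X') (std_word n h))"
      unfolding h_rot using step_T2[where p = p, OF g_rot p_pos] n2 by simp
  qed
  then have "(rotate (L - length X) (rotate (length X) (std_word n g)),
      rotate (L - length X) (rotate (length X') (std_word n h))) \<in> moves\<^sup>*"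
    by (rule reachable_rotate)
  moreover have "length X \<le> L" using length_g g_split by simp
  then have "rotate (L - length X) (rotate (length X) (std_word n g)) = std_word n g"
    using length_g by (simp add: rotate_rotate)
  moreover have "L - length X + length X' = L - 1" using \<open>length X \<le> L\<close> length_X by simp
  then have "rotate (L - length X) (rotate (length X') (std_word n h)) = rotate (L - 1) (std_word n h)"
    by (simp add: rotate_rotate)
  ultimately show ?thesis using h unfolding h_def by simp
qed

text \<open>Across the cut between the last and the first block the (T2) move shifts the word by
  one site.\<close>

lemma move_own_box:
  assumes "admissible n L g" "2 \<le> n" "k < n" "g k = k # t"
  shows "admissible n L (g(prev_label k := prev_label k # g (prev_label k), k := t)) \<and>
    (std_word n g, rotate (if k = 0 then L - 1 else 0)
       (std_word n (g(prev_label k := prev_label k # g (prev_label k), k := t)))) \<in> moves\<^sup>*"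
proof (cases k)
  case 0
  then show ?thesis using move_own_box_0 assms by (simp add: prev_label_0)
next
  case (Suc k')
  then have "prev_label k = k'" using assms(3) by (simp add: prev_label_pos)
  then show ?thesis using move_own_box_Suc[of g k' t] assms Suc by simp
qed

definition with_own_box :: "(nat \<Rightarrow> nat list) \<Rightarrow> nat \<Rightarrow> nat \<Rightarrow> nat list" where
  "with_own_box g i = g(i := i # g i)"

lemma move_own_box_with_own_box:
  assumes "admissible n L (with_own_box g i)" "2 \<le> n" "i < n"
  shows "(std_word n (with_own_box g i),
      rotate (if i = 0 then L - 1 else 0) (std_word n (with_own_box g (prev_label i)))) \<in> moves\<^sup>*"
proof -
  have "(with_own_box g i)(prev_label i := prev_label i # with_own_box g i (prev_label i), i := g i)
      = with_own_box g (prev_label i)"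
    using prev_label_neq[OF assms(2,3)] by (auto simp: with_own_box_def fun_eq_iff)
  then show ?thesis using move_own_box[OF assms(1-3)] by (simp add: with_own_box_def)
qed

lemma admissible_with_own_box:
  assumes "admissible n L (with_own_box g k)" "k < n" "i < n"
  shows "admissible n L (with_own_box g i)"
  unfolding admissible_def
proof
  show "\<forall>j<n. \<forall>x\<in>set (with_own_box g i j). x < n"
  proof (intro allI impI ballI)
    fix j x assume j: "j < n" and x: "x \<in> set (with_own_box g i j)"
    have "\<forall>x\<in>set (g j). x < n"
      using admissible_label[OF assms(1) j] by (cases "j = k") (auto simp: with_own_box_def)
    then show "x < n" using x assms(3) by (cases "j = i") (auto simp: with_own_box_def)
  qed
  show "length (std_word n (with_own_box g i)) = L"
    using assms length_std_word_Cons[of i n g] length_std_word_Cons[of k n g]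
    unfolding with_own_box_def admissible_def by simp
qed

lemma sub_mod_eq_0_iff: "k < n \<Longrightarrow> s < n \<Longrightarrow> (k + n - s) mod n = 0 \<longleftrightarrow> s = k"
proof (cases "s \<le> k")
  case True
  assume "k < n"
  have "k + n - s = (k - s) + n" using True by simp
  then have "(k + n - s) mod n = k - s" using \<open>k < n\<close> by (simp only: mod_add_self2) simp
  then show ?thesis using True by auto
qed simp

text \<open>After \<open>s\<close> moves the own box sits in block \<open>k - s\<close> (mod \<open>n\<close>); passing the cut
  costs one rotation.\<close>

lemma own_box_tour:
  assumes n2: "2 \<le> n" and g: "admissible n L (with_own_box g k)" and k: "k < n"
  shows "s \<le> n \<Longrightarrow> (std_word n (with_own_box g k),
    rotate (if k < s then L - 1 else 0) (std_word n (with_own_box g ((k + n - s) mod n)))) \<in> moves\<^sup>*"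
proof (induction s)
  case 0
  then show ?case using k by simp
next
  case (Suc s)
  then have s: "s < n" by simp
  define i where "i = (k + n - s) mod n"
  define D where "D = (if k < s then L - 1 else 0)"
  have i: "i < n" using n_pos by (simp add: i_def)
  have IH: "(std_word n (with_own_box g k), rotate D (std_word n (with_own_box g i))) \<in> moves\<^sup>*"
    using Suc s by (simp add: D_def i_def)
  have "(std_word n (with_own_box g i),
      rotate (if i = 0 then L - 1 else 0) (std_word n (with_own_box g (prev_label i)))) \<in> moves\<^sup>*"
    using move_own_box_with_own_box[OF admissible_with_own_box[OF g k i] n2 i] .
  from reachable_rotate[OF this, of D]
  have "(rotate D (std_word n (with_own_box g i)),
      rotate (D + (if i = 0 then L - 1 else 0)) (std_word n (with_own_box g (prev_label i)))) \<in> moves\<^sup>*"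
    by (simp add: rotate_rotate)
  moreover have "prev_label i = (k + n - Suc s) mod n"
    using prev_label_mod[of "k + n - s"] s unfolding i_def by simp
  moreover have "D + (if i = 0 then L - 1 else 0) = (if k < Suc s then L - 1 else 0)"
    using sub_mod_eq_0_iff[OF k s] unfolding D_def i_def by auto
  ultimately show ?case using rtrancl_trans[OF IH] by simp
qed

lemma own_box_round_trip:
  assumes "2 \<le> n" "admissible n L (with_own_box g k)" "k < n"
  shows "(std_word n (with_own_box g k), rotate (L - 1) (std_word n (with_own_box g k))) \<in> moves\<^sup>*"
  using own_box_tour[OF assms, of n] assms(3) by simp

text \<open>The (T2) move is not reversible in one step, but it lies on the cycle of
  \<open>own_box_tour\<close>, and all rotations of a word on such a cycle are reachable from each other.\<close>

lemma move_own_box_reduces: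
  assumes g: "admissible n L g" and n2: "2 \<le> n" and k: "k < n" and gk: "g k = k # t"
  shows "reduces_to g (g(prev_label k := prev_label k # g (prev_label k), k := t))"
proof -
  define g0 where "g0 = g(k := t)"
  define h where "h = g(prev_label k := prev_label k # g (prev_label k), k := t)"
  define \<delta> where "\<delta> = (if k = 0 then L - 1 else 0)"
  have g0_k: "with_own_box g0 k = g" using gk by (auto simp: with_own_box_def g0_def fun_eq_iff)
  have g0_prev: "with_own_box g0 (prev_label k) = h"
    using prev_label_neq[OF n2 k] by (auto simp: with_own_box_def g0_def h_def fun_eq_iff)
  have forward: "admissible n L h \<and> (std_word n g, rotate \<delta> (std_word n h)) \<in> moves\<^sup>*"
    using move_own_box[OF g n2 k gk] by (simp add: h_def \<delta>_def)
  have g0: "admissible n L (with_own_box g0 k)" using g g0_k by simp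
  have "(prev_label k + n - (n - 1)) mod n = k"
    using n2 k by (cases "k = 0") (simp_all add: prev_label_0 prev_label_pos)
  then have "(std_word n h, rotate (if prev_label k < n - 1 then L - 1 else 0) (std_word n g)) \<in> moves\<^sup>*"
    using own_box_tour[OF n2 admissible_with_own_box[OF g0 k prev_label_less[of k]] prev_label_less[of k], of "n - 1"]
    by (simp add: g0_k g0_prev)
  then obtain D where "(std_word n h, rotate D (std_word n g)) \<in> moves\<^sup>*" by blast
  from reachable_rotate[OF this, of \<delta>]
  have "(rotate \<delta> (std_word n h), rotate (\<delta> + D) (std_word n g)) \<in> moves\<^sup>*"
    by (simp add: rotate_rotate)
  moreover have "(rotate (\<delta> + D) (std_word n g), rotate 0 (std_word n g)) \<in> moves\<^sup>*"
    using own_box_round_trip[OF n2 g0 k] g unfolding g0_k admissible_def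
    by (intro rotations_reachable) simp_all
  ultimately have "(rotate \<delta> (std_word n h), std_word n g) \<in> moves\<^sup>*" by (simp add: rtrancl_trans)
  then have "communicate (std_word n g) (rotate \<delta> (std_word n h))"
    using forward unfolding communicate_def by simp
  then show ?thesis using forward unfolding reduces_to_def h_def by blast
qed


section \<open>Reduction to the ground configuration\<close>

definition sweep :: "nat \<Rightarrow> (nat \<Rightarrow> nat list) \<Rightarrow> nat \<Rightarrow> nat list" where
  "sweep k g = g(prev_label k := replicate (count_list (g k) k) (prev_label k) @ g (prev_label k)
     @ filter (\<lambda>y. y \<noteq> k) (g k), k := [])"

lemma reduces_to_sweep_gen:
  assumes n2: "2 \<le> n" and k: "k < n"
  shows "admissible n L g \<Longrightarrow> g k = xs \<Longrightarrow> reduces_to g (g(prev_label k :=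
    replicate (count_list xs k) (prev_label k) @ g (prev_label k) @ filter (\<lambda>y. y \<noteq> k) xs, k := []))"
proof (induction xs arbitrary: g)
  case Nil
  then have "g(prev_label k := g (prev_label k), k := []) = g" by (auto simp: fun_eq_iff)
  then show ?case using Nil reduces_to_refl by simp
next
  case (Cons x xs)
  have prev: "prev_label k \<noteq> k" using prev_label_neq[OF n2 k] .
  show ?case
  proof (cases "x = k")
    case True
    define g1 where "g1 = g(prev_label k := prev_label k # g (prev_label k), k := xs)"
    have g1: "reduces_to g g1"
      using move_own_box_reduces[OF Cons.prems(1) n2 k] Cons.prems(2) True by (simp add: g1_def)
    have eq: "g1(prev_label k := replicate (count_list xs k) (prev_label k) @ g1 (prev_label k)
        @ filter (\<lambda>y. y \<noteq> k) xs, k := [])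
      = g(prev_label k := replicate (count_list (x # xs) k) (prev_label k) @ g (prev_label k)
        @ filter (\<lambda>y. y \<noteq> k) (x # xs), k := [])"
      using prev True by (auto simp: g1_def fun_eq_iff replicate_app_Cons_same)
    have "admissible n L g1" "g1 k = xs" using g1 by (simp_all add: reduces_to_def g1_def)
    from reduces_to_trans[OF g1 Cons.IH[OF this]] show ?thesis unfolding eq .
  next
    case False
    define g1 where "g1 = g(prev_label k := g (prev_label k) @ [x], k := xs)"
    have g1: "reduces_to g g1"
      using move_foreign_box[OF Cons.prems(1) n2 k] Cons.prems(2) False by (simp add: g1_def)
    have eq: "g1(prev_label k := replicate (count_list xs k) (prev_label k) @ g1 (prev_label k)
        @ filter (\<lambda>y. y \<noteq> k) xs, k := [])
      = g(prev_label k := replicate (count_list (x # xs) k) (prev_label k) @ g (prev_label k)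
        @ filter (\<lambda>y. y \<noteq> k) (x # xs), k := [])"
      using prev False by (auto simp: g1_def fun_eq_iff)
    have "admissible n L g1" "g1 k = xs" using g1 by (simp_all add: reduces_to_def g1_def)
    from reduces_to_trans[OF g1 Cons.IH[OF this]] show ?thesis unfolding eq .
  qed
qed

lemma reduces_to_sweep: "2 \<le> n \<Longrightarrow> k < n \<Longrightarrow> admissible n L g \<Longrightarrow> reduces_to g (sweep k g)"
  unfolding sweep_def using reduces_to_sweep_gen by blast

lemma sweep_Nil: "i = k \<or> (i \<noteq> prev_label k \<and> g i = []) \<Longrightarrow> sweep k g i = []"
  by (auto simp: sweep_def)

lemma set_sweep_prev:
  "prev_label k \<noteq> k \<Longrightarrow> x \<in> set (sweep k g (prev_label k)) \<Longrightarrow>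
     x = prev_label k \<or> x \<in> set (g (prev_label k)) \<or> (x \<in> set (g k) \<and> x \<noteq> k)"
  by (auto simp: sweep_def)

lemma reduces_to_block_0:
  assumes n2: "2 \<le> n" and g: "admissible n L g"
  shows "\<exists>h. reduces_to g h \<and> (\<forall>i. 0 < i \<and> i < n \<longrightarrow> h i = [])"
proof -
  have "k \<le> n - 1 \<Longrightarrow> \<exists>h. reduces_to g h \<and> (\<forall>i. k < i \<and> i < n \<longrightarrow> h i = [])" for k
  proof (induction k rule: inc_induct)
    case base
    show ?case using reduces_to_refl[OF g] by auto
  next
    case (step k)
    then obtain h where h: "reduces_to g h" "\<forall>i. Suc k < i \<and> i < n \<longrightarrow> h i = []" by blast
    have prev: "prev_label (Suc k) = k" using step.hyps by (simp add: prev_label_pos)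
    have "admissible n L h" using h(1) by (simp add: reduces_to_def)
    then have "reduces_to g (sweep (Suc k) h)"
      using reduces_to_trans[OF h(1) reduces_to_sweep[OF n2]] step.hyps by simp
    moreover have "\<forall>i. k < i \<and> i < n \<longrightarrow> sweep (Suc k) h i = []"
      using h(2) prev by (auto intro: sweep_Nil)
    ultimately show ?case by blast
  qed
  then show ?thesis by auto
qed

lemma reduces_to_single_block:
  assumes n2: "2 \<le> n" and g: "admissible n L g" and k: "1 \<le> k" "k \<le> n - 1"
  shows "\<exists>h. reduces_to g h \<and> (\<forall>i<n. i \<noteq> k \<longrightarrow> h i = []) \<and> (\<forall>x\<in>set (h k). 1 \<le> x \<and> x \<le> k)"
  using k(2)
proof (induction k rule: inc_induct)
  case base
  obtain h where h: "reduces_to g h" "\<forall>i. 0 < i \<and> i < n \<longrightarrow> h i = []"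
    using reduces_to_block_0[OF n2 g] by blast
  have prev: "prev_label 0 = n - 1" "prev_label 0 \<noteq> 0" using n2 by (simp_all add: prev_label_0)
  have h_adm: "admissible n L h" using h(1) by (simp add: reduces_to_def)
  have "reduces_to g (sweep 0 h)"
    using reduces_to_trans[OF h(1) reduces_to_sweep[OF n2 _ h_adm]] n2 by simp
  moreover have "\<forall>i<n. i \<noteq> n - 1 \<longrightarrow> sweep 0 h i = []"
    using h(2) prev by (auto intro: sweep_Nil)
  moreover have "\<forall>x\<in>set (sweep 0 h (n - 1)). 1 \<le> x \<and> x \<le> n - 1"
  proof
    fix x assume "x \<in> set (sweep 0 h (n - 1))"
    moreover have "h (n - 1) = []" using h(2) n2 by simp
    moreover have "x \<in> set (h 0) \<Longrightarrow> x < n" using admissible_label[OF h_adm, of 0] n2 by simp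
    ultimately show "1 \<le> x \<and> x \<le> n - 1" using set_sweep_prev[of 0 x h] prev by auto
  qed
  ultimately show ?case by blast
next
  case (step m)
  then obtain h where h: "reduces_to g h" "\<forall>i<n. i \<noteq> Suc m \<longrightarrow> h i = []"
    "\<forall>x\<in>set (h (Suc m)). 1 \<le> x \<and> x \<le> Suc m" by blast
  have prev: "prev_label (Suc m) = m" "prev_label (Suc m) \<noteq> Suc m" using step.hyps by (simp_all add: prev_label_pos)
  have h_adm: "admissible n L h" using h(1) by (simp add: reduces_to_def)
  have "reduces_to g (sweep (Suc m) h)"
    using reduces_to_trans[OF h(1) reduces_to_sweep[OF n2 _ h_adm]] step.hyps by simp
  moreover have "\<forall>i<n. i \<noteq> m \<longrightarrow> sweep (Suc m) h i = []"
    using h(2) prev by (auto intro: sweep_Nil)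
  moreover have "\<forall>x\<in>set (sweep (Suc m) h m). 1 \<le> x \<and> x \<le> m"
  proof
    fix x assume "x \<in> set (sweep (Suc m) h m)"
    moreover have "h m = []" using h(2) step.hyps by simp
    ultimately show "1 \<le> x \<and> x \<le> m" using set_sweep_prev[of "Suc m" x h] prev h(3) step.hyps k(1) by auto
  qed
  ultimately show ?case by blast
qed

definition ground :: "nat \<Rightarrow> nat list" where
  "ground i = (if i = 0 then replicate (L - n) 0 else [])"

lemma admissible_ground: "admissible n L ground"
proof -
  have "length (std_word n ground) = n + length (ground 0)"
    using n_pos by (intro length_std_word_single_block) (auto simp: ground_def)
  then show ?thesis using n_pos n_less_L unfolding admissible_def by (simp add: ground_def)
qed

lemma std_word_eq_ground:
  assumes g: "admissible n L g" and "\<forall>i. 0 < i \<and> i < n \<longrightarrow> g i = []" "\<forall>x\<in>set (g 0). x = 0"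
  shows "std_word n g = std_word n ground"
proof -
  have "length (std_word n g) = n + length (g 0)"
    using assms(2) n_pos by (intro length_std_word_single_block) auto
  then have "length (g 0) = L - n" using g unfolding admissible_def by linarith
  moreover have "g 0 = replicate (length (g 0)) 0" using assms(3) by (simp add: replicate_length_same)
  ultimately have "g 0 = ground 0" by (simp add: ground_def)
  then show ?thesis using assms(2) by (intro std_word_cong) (auto simp: ground_def)
qed

lemma reduces_to_ground:
  assumes g: "admissible n L g"
  shows "reduces_to g ground"
proof (cases "n = 1")
  case True
  have "\<forall>x\<in>set (g 0). x = 0" using admissible_label[OF g, of 0] True by auto
  then have "std_word n g = std_word n ground" using std_word_eq_ground[OF g] True by simp
  then show ?thesis using reduces_to_refl[OF admissible_ground] unfolding reduces_to_def by simp
next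
  case False
  then have n2: "2 \<le> n" using n_pos by simp
  obtain h where h: "reduces_to g h" "\<forall>i<n. i \<noteq> 1 \<longrightarrow> h i = []" "\<forall>x\<in>set (h 1). x = 1"
    using reduces_to_single_block[OF n2 g, of 1] n2 by fastforce
  have prev: "prev_label 1 = 0" "prev_label 1 \<noteq> 1" using n2 by (simp_all add: prev_label_pos)
  have h_adm: "admissible n L h" using h(1) by (simp add: reduces_to_def)
  have sweep: "reduces_to g (sweep 1 h)"
    using reduces_to_trans[OF h(1) reduces_to_sweep[OF n2 _ h_adm]] n2 by simp
  moreover have "\<forall>i. 0 < i \<and> i < n \<longrightarrow> sweep 1 h i = []"
    using h(2) prev by (auto intro: sweep_Nil)
  moreover have "\<forall>x\<in>set (sweep 1 h 0). x = 0"
    using set_sweep_prev[of 1 _ h] prev h(2,3) n2 by fastforce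
  ultimately have "std_word n (sweep 1 h) = std_word n ground"
    by (intro std_word_eq_ground) (simp_all add: reduces_to_def)
  then show ?thesis using sweep admissible_ground unfolding reduces_to_def by simp
qed


lemma ground_round_trip_single:
  assumes n: "n = 1"
  shows "(std_word n ground, rotate (L - 1) (std_word n ground)) \<in> moves\<^sup>*"
proof -
  define w where "w = std_word n ground"
  have w: "w = Bul 0 # replicate (L - 1) (Box 0)"
    unfolding w_def std_word_def block_def ground_def using n by simp
  have L2: "2 \<le> L" using n n_less_L by simp
  have length_w: "length w = L" using L_pos w by simp
  have w0: "w ! 0 = Bul 0" using w by simp
  have wi: "w ! i = Box 0" if "1 \<le> i" "i < L" for i
    using that w by (auto simp: nth_Cons split: nat.splits)
  have "w \<in> Omega L n" unfolding w_def using admissible_ground by (rule admissible_in_Omega)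
  moreover have "rotate (L - 1) w \<noteq> w"
  proof -
    have "rotate (L - 1) w ! 0 = w ! (L - 1)" using length_w L_pos by (simp add: nth_rotate)
    then show ?thesis using wi[of "L - 1"] w0 L2 by auto
  qed
  moreover have "prev_dist w 0 = L"
    unfolding prev_dist_def length_w
  proof (rule Least_equality)
    show "1 \<le> L \<and> is_bul (wat w (0 + L - L))" using L_pos w0 by (simp add: wat_def)
    fix m assume m: "1 \<le> m \<and> is_bul (wat w (0 + L - m))"
    show "L \<le> m"
    proof (rule ccontr)
      assume "\<not> L \<le> m"
      then have "wat w (0 + L - m) = Box 0" using length_w m wi[of "L - m"] by (simp add: wat_def)
      then show False using m by simp
    qed
  qed
  moreover have "wat w 0 = Bul 0" "wat w (0 + 1) = Box 0" "wat w (0 + L - L) = Bul ((0 + n - 1) mod n)"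
    using length_w L2 w0 wi n by (simp_all add: wat_def)
  moreover have "t2_res n w 0 L 0 = rotate (L - 1) w" using t2_res_whole_ring[of w 0 n] L2 length_w w0 by simp
  ultimately have "rate_T2 n p w (rotate (L - 1) w) 0 = p 0"
    unfolding rate_T2_def Let_def length_w by simp
  then have "step n p q w (rotate (L - 1) w)" using p_pos[of 0] n length_w L_pos
    unfolding step_def by (intro exI[of _ 0]) auto
  then show ?thesis
    using step_in_moves \<open>w \<in> Omega L n\<close> Omega_rotate \<open>rotate (L - 1) w \<noteq> w\<close> unfolding w_def by metis
qed

lemma ground_round_trip: "(std_word n ground, rotate (L - 1) (std_word n ground)) \<in> moves\<^sup>*"
proof (cases "n = 1")
  case True
  then show ?thesis by (rule ground_round_trip_single)
next
  case False
  then have n2: "2 \<le> n" using n_pos by simp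
  have "L - n = Suc (L - n - 1)" using n_less_L by simp
  then have "with_own_box (ground(0 := replicate (L - n - 1) 0)) 0 = ground"
    unfolding with_own_box_def ground_def by (auto simp: fun_eq_iff simp del: replicate_Suc) (metis replicate_Suc)
  then show ?thesis using own_box_round_trip[OF n2, of "ground(0 := replicate (L - n - 1) 0)" 0]
    admissible_ground n2 by simp
qed

lemma Omega_communicate_ground:
  assumes "x \<in> Omega L n"
  obtains d where "communicate x (rotate d (std_word n ground))"
proof -
  obtain c g where g: "admissible n L g" "x = rotate c (std_word n g)"
    using Omega_rotate_std_word[OF assms n_pos] by blast
  then obtain d where "communicate (std_word n g) (rotate d (std_word n ground))"
    using reduces_to_ground unfolding reduces_to_def by blast
  from communicate_rotate[OF this, of c] show ?thesis
    using that g(2) by (simp add: rotate_rotate)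
qed

lemma moves_connected:
  assumes "x \<in> Omega L n" "y \<in> Omega L n"
  shows "(x, y) \<in> moves\<^sup>*"
proof -
  obtain a where a: "communicate x (rotate a (std_word n ground))"
    using Omega_communicate_ground[OF assms(1)] .
  obtain b where b: "communicate y (rotate b (std_word n ground))"
    using Omega_communicate_ground[OF assms(2)] .
  have "(rotate a (std_word n ground), rotate b (std_word n ground)) \<in> moves\<^sup>*"
    using rotations_reachable[OF ground_round_trip] admissible_ground by (simp add: admissible_def)
  then show ?thesis using a b unfolding communicate_def by (meson rtrancl_trans)
qed

end

theorem proposition4p1:
  fixes L n :: nat and p q :: "nat \<Rightarrow> real"
  assumes "1 \<le> L" and "1 \<le> n" and "n < L"
    and "\<forall>k<n. p k > 0 \<and> q k > 0"
  shows "irreducible_ctmc (Omega L n) (Q_rate n p q)"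
proof -
  interpret ring_chain n L p q
    using assms by unfold_locales auto
  show ?thesis
    unfolding irreducible_ctmc_def using moves_connected rtrancl_mono[OF moves_subset_Q_rate] by blast
qed

end
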